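(* For any integer $k>0$, there is a logspace many-one reduction $f$ from SAT to monotone NAE$(3k+3)$SAT such that: if $I$ is an unsatisfiable SAT instance then $f(I)$ is not NAE-satisfiable, and if $I$ is a satisfiable SAT instance then $f(I)$ is $k$-robustly NAE-satisfiable.
   Context: SAT is the problem of deciding satisfiability of a propositional formula in conjunctive normal form. An instance of monotone NAE$m$SAT is a finite set of clauses, each a disjunction of $m$ (unnegated) variables; a truth assignment NAE-satisfies it if in every clause at least one variable is assigned $1$ and at least one is assigned $0$. Equivalently, it is an instance of the constraint satisfaction problem over the domain $\{0,1\}$ with the single $m$-ary relation $N_m=\{0,1\}^m\setminus\{(0,\dots,0),(1,\dots,1)\}$. A partial truth assignment $p$ on a set $Y$ of variables is locally compatible if for every clause $(y_1\vee\dots\vee y_m)$ and every set of positions $\{i_1<\dots<i_t\}$ with $y_{i_1},\dots,y_{i_t}\in Y$, the tuple $(p(y_{i_1}),\dots,p(y_{i_t}))$ lies in the projection of $N_m$ onto coordinates $i_1,\dots,i_t$. An instance is $k$-robustly NAE-satisfiable if every locally compatible partial truth assignment on any $k$ variables extends to a NAE-satisfying truth assignment of all variables. *)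

theory Defs
  imports Main "HOL-Library.Discrete_Functions"
begin

text \<open>A literal is a pair (polarity, variable); True = unnegated.
  A SAT instance is a CNF formula, i.e. a list of clauses (lists of literals).\<close>
type_synonym lit = "bool \<times> nat"
type_synonym cnf = "lit list list"

definition cnf_sat :: "cnf \<Rightarrow> bool" where
  "cnf_sat F \<longleftrightarrow> (\<exists>a :: nat \<Rightarrow> bool. \<forall>C \<in> set F. \<exists>(b, v) \<in> set C. a v = b)"

text \<open>A monotone NAE instance: a list of clauses, each a list of (unnegated) variables.
  It is an NAE-m-SAT instance if every clause has exactly m variable positions.\<close>
type_synonym nae = "nat list list"

definition is_nae_m :: "nat \<Rightarrow> nae \<Rightarrow> bool" where
  "is_nae_m m G \<longleftrightarrow> (\<forall>C \<in> set G. length C = m)"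

definition nae_vars :: "nae \<Rightarrow> nat set" where
  "nae_vars G = (\<Union>C \<in> set G. set C)"

definition nae_sat_by :: "nae \<Rightarrow> (nat \<Rightarrow> bool) \<Rightarrow> bool" where
  "nae_sat_by G a \<longleftrightarrow> (\<forall>C \<in> set G. (\<exists>x \<in> set C. a x) \<and> (\<exists>x \<in> set C. \<not> a x))"

definition nae_sat :: "nae \<Rightarrow> bool" where
  "nae_sat G \<longleftrightarrow> (\<exists>a. nae_sat_by G a)"

text \<open>Local compatibility of a partial assignment p on Y: for every clause C (of length m) and every
  set S of positions whose variables lie in Y, the tuple (p (C!i))_{i\<in>S} lies in the projection of
  N_m = {0,1}^m - {0...0, 1...1} onto S, i.e. some t \<in> N_m agrees with it on S.\<close>
definition loc_compat :: "nae \<Rightarrow> nat set \<Rightarrow> (nat \<Rightarrow> bool) \<Rightarrow> bool" where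
  "loc_compat G Y p \<longleftrightarrow>
     (\<forall>C \<in> set G. \<forall>S. S \<subseteq> {i. i < length C \<and> C ! i \<in> Y} \<longrightarrow>
        (\<exists>t :: nat \<Rightarrow> bool. (\<exists>i < length C. t i) \<and> (\<exists>i < length C. \<not> t i) \<and>
                            (\<forall>i \<in> S. t i = p (C ! i))))"

definition robust_nae_sat :: "nat \<Rightarrow> nae \<Rightarrow> bool" where
  "robust_nae_sat k G \<longleftrightarrow>
     (\<forall>Y p. Y \<subseteq> nae_vars G \<and> card Y = k \<and> loc_compat G Y p \<longrightarrow>
        (\<exists>a. nae_sat_by G a \<and> (\<forall>y \<in> Y. a y = p y)))"

datatype sym = S0 | S1 | SNeg | SEndLit | SEndClause

fun bin :: "nat \<Rightarrow> sym list" where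
  "bin n = (if n < 2 then [if n = 0 then S0 else S1]
            else (if n mod 2 = 0 then S0 else S1) # bin (n div 2))"

definition enc_lit :: "lit \<Rightarrow> sym list" where
  "enc_lit l = (if fst l then [] else [SNeg]) @ bin (snd l) @ [SEndLit]"

definition enc_cnf :: "cnf \<Rightarrow> sym list" where
  "enc_cnf F = concat (map (\<lambda>C. concat (map enc_lit C) @ [SEndClause]) F)"

definition enc_nae :: "nae \<Rightarrow> sym list" where
  "enc_nae G = concat (map (\<lambda>C. concat (map (\<lambda>v. bin v @ [SEndLit]) C) @ [SEndClause]) G)"

text \<open>A deterministic machine with a two-way read-only input tape (with end markers, read as None),
  one work tape over the alphabet {0..<nwork} (0 = blank), and a one-way write-only output tape.  The transition gives: new state, input head move, symbol written on the
  work tape, work head move, optional output symbol.\<close>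
datatype dir = L | N | R

datatype ltm = LTM (nstates: nat) (nwork: nat) (start: nat) (halting: "nat \<Rightarrow> bool")
  (delta: "nat \<Rightarrow> sym option \<Rightarrow> nat \<Rightarrow> nat \<times> dir \<times> nat \<times> dir \<times> sym option")

definition wf_ltm :: "ltm \<Rightarrow> bool" where
  "wf_ltm M \<longleftrightarrow> 0 < nwork M \<and> start M < nstates M \<and>
     (\<forall>q s w. q < nstates M \<and> w < nwork M \<longrightarrow>
        (case delta M q s w of (q', _, w', _, _) \<Rightarrow> q' < nstates M \<and> w' < nwork M))"

text \<open>Configuration: state, input head (0 and length x + 1 are the end markers), work tape contents,
  work head, output produced so far.\<close>
type_synonym config = "nat \<times> nat \<times> (nat \<Rightarrow> nat) \<times> nat \<times> sym list"

definition read_in :: "sym list \<Rightarrow> nat \<Rightarrow> sym option" where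
  "read_in x i = (if 1 \<le> i \<and> i \<le> length x then Some (x ! (i - 1)) else None)"

fun move :: "dir \<Rightarrow> nat \<Rightarrow> nat" where
  "move L i = i - 1" | "move N i = i" | "move R i = Suc i"

definition step :: "ltm \<Rightarrow> sym list \<Rightarrow> config \<Rightarrow> config" where
  "step M x c = (case c of (q, ih, wt, wh, out) \<Rightarrow>
     if halting M q then c else
     (case delta M q (read_in x ih) (wt wh) of (q', di, w, dw, ou) \<Rightarrow>
        (q', min (move di ih) (Suc (length x)), wt(wh := w), move dw wh,
         out @ (case ou of None \<Rightarrow> [] | Some s \<Rightarrow> [s]))))"

definition init_config :: "ltm \<Rightarrow> config" where
  "init_config M = (start M, 0, \<lambda>_. 0, 0, [])"

definition run :: "ltm \<Rightarrow> sym list \<Rightarrow> nat \<Rightarrow> config" where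
  "run M x t = (step M x ^^ t) (init_config M)"

definition computes_in_space :: "ltm \<Rightarrow> sym list \<Rightarrow> sym list \<Rightarrow> nat \<Rightarrow> bool" where
  "computes_in_space M x y s \<longleftrightarrow>
     (\<exists>t. (case run M x t of (q, _, _, _, out) \<Rightarrow> halting M q \<and> out = y) \<and>
          (\<forall>t' \<le> t. (case run M x t' of (_, _, _, wh, _) \<Rightarrow> wh < s)))"

definition logspace_reduction_SAT_NAE :: "nat \<Rightarrow> (cnf \<Rightarrow> nae) \<Rightarrow> bool" where
  "logspace_reduction_SAT_NAE m g \<longleftrightarrow>
     (\<forall>I. is_nae_m m (g I)) \<and> (\<forall>I. cnf_sat I \<longleftrightarrow> nae_sat (g I)) \<and>
     (\<exists>M c. wf_ltm M \<and>
        (\<forall>I. computes_in_space M (enc_cnf I) (enc_nae (g I))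
               (c * floor_log (length (enc_cnf I) + 2) + c)))"

end

theory Submission
  imports Defs "HOL-Library.Countable"
begin

text \<open>
  The reduction goes through monotone NAE-3-SAT. Besides the input variables and their
  complements it uses a constant variable $z$ and, for the $i$-th literal position, a prefix
  variable $d_i$ with its complement; NAE-triples force complements to be complementary,
  $d_i \to d_{i-1} \vee \ell_i$ inside a clause, $d_i \to \ell_i$ at its first literal, and $d$
  true at its last one. Up to flipping all values (so that $z = 0$), NAE-solutions are exactly
  the satisfying assignments extended by the prefix values.

  Each triple $(a,b,c)$ is then amplified: every variable gets $2k+1$ copies, and for all
  $(k+1)$-sets $A, B, C$ of copy indices the copies $A$ of $a$, $B$ of $b$ and $C$ of $c$ form a
  clause of width $3k+3$. A solution of the amplified instance yields one of the triples by
  majority vote. Conversely, giving every copy the value of its variable in a solution of the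
  triples and then overriding any $k$ variables arbitrarily still solves the amplified instance,
  because each $(k+1)$-set keeps an untouched copy; hence satisfiable inputs become
  $k$-robustly NAE-satisfiable, whatever the local compatibility of the overridden values.

  The transducer prints the clauses directly from the input; its work tape holds only the
  current literal position in binary, so it runs in logarithmic space.
\<close>

definition work_head :: "config \<Rightarrow> nat" where "work_head c = (case c of (_,_,_,wh,_) \<Rightarrow> wh)"

definition reaches :: "ltm \<Rightarrow> sym list \<Rightarrow> nat \<Rightarrow> config \<Rightarrow> config \<Rightarrow> bool" where
  "reaches M x s c c' \<longleftrightarrow> (\<exists>t. (step M x ^^ t) c = c' \<and> (\<forall>t' \<le> t. work_head ((step M x ^^ t') c) < s))"

lemma reaches_refl: "work_head c < s \<Longrightarrow> reaches M x s c c"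
  unfolding reaches_def by (rule exI[of _ 0]) simp

lemma reaches_trans: "reaches M x s c1 c2 \<Longrightarrow> reaches M x s c2 c3 \<Longrightarrow> reaches M x s c1 c3"
  unfolding reaches_def
proof (elim exE conjE)
  fix t1 t2
  assume 1: "(step M x ^^ t1) c1 = c2" "\<forall>t'\<le>t1. work_head ((step M x ^^ t') c1) < s"
     and 2: "(step M x ^^ t2) c2 = c3" "\<forall>t'\<le>t2. work_head ((step M x ^^ t') c2) < s"
  have "(step M x ^^ (t2 + t1)) c1 = c3" using 1 2 by (simp add: funpow_add)
  moreover have "\<forall>t'\<le>t2 + t1. work_head ((step M x ^^ t') c1) < s"
  proof (intro allI impI)
    fix t' assume "t' \<le> t2 + t1"
    show "work_head ((step M x ^^ t') c1) < s"
    proof (cases "t' \<le> t1")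
      case True then show ?thesis using 1 by simp
    next
      case False
      then have "(step M x ^^ t') c1 = (step M x ^^ (t' - t1)) c2"
      proof -
        have "t' = (t' - t1) + t1" using False by simp
        then have "(step M x ^^ t') c1 = (step M x ^^ (t' - t1)) ((step M x ^^ t1) c1)"
          by (metis funpow_add o_apply)
        then show ?thesis using 1 by simp
      qed
      then show ?thesis using 2 False \<open>t' \<le> t2 + t1\<close> by simp
    qed
  qed
  ultimately show "\<exists>t. (step M x ^^ t) c1 = c3 \<and> (\<forall>t'\<le>t. work_head ((step M x ^^ t') c1) < s)" by blast
qed

lemma reaches_step: "work_head c < s \<Longrightarrow> reaches M x s (step M x c) c' \<Longrightarrow> reaches M x s c c'"
  unfolding reaches_def
proof (elim exE conjE)
  fix t assume a: "work_head c < s" "(step M x ^^ t) (step M x c) = c'"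
    "\<forall>t'\<le>t. work_head ((step M x ^^ t') (step M x c)) < s"
  have "(step M x ^^ Suc t) c = c'" using a(2) by (simp only: funpow_Suc_right o_apply)
  moreover have "\<forall>t'\<le>Suc t. work_head ((step M x ^^ t') c) < s"
  proof (intro allI impI)
    fix t' assume "t' \<le> Suc t"
    then show "work_head ((step M x ^^ t') c) < s"
    proof (cases t')
      case 0 then show ?thesis using a(1) by simp
    next
      case (Suc u)
      then have "(step M x ^^ t') c = (step M x ^^ u) (step M x c)"
        by (simp only: funpow_Suc_right o_apply)
      then show ?thesis using a(3) Suc \<open>t' \<le> Suc t\<close> by simp
    qed
  qed
  ultimately show "\<exists>t. (step M x ^^ t) c = c' \<and> (\<forall>t'\<le>t. work_head ((step M x ^^ t') c) < s)" by blast
qed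

lemma computes_in_space_if_reaches:
  assumes "reaches M x s (init_config M) (q, ih, wt, wh, y)" "halting M q"
  shows "computes_in_space M x y s"
proof -
  obtain t where t: "run M x t = (q, ih, wt, wh, y)" "\<forall>t' \<le> t. work_head (run M x t') < s"
    using assms(1) unfolding reaches_def run_def by blast
  have "case run M x t' of (_, _, _, wh, _) \<Rightarrow> wh < s" if "t' \<le> t" for t'
    using t(2) that unfolding work_head_def by (cases "run M x t'") auto
  then show ?thesis
    unfolding computes_in_space_def using t(1) assms(2) by (intro exI[of _ t]) simp
qed

section \<open>From SAT to NAE-3-SAT\<close>

text \<open>The variable \<open>var_code kd p\<close> is $z$ for \<open>kd = 0, p = 1\<close>, the input variable
  \<open>p - 1\<close> or its complement for \<open>kd = 1, 2\<close>, and $d_p$ or its complement for \<open>kd = 3, 4\<close>.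
  A \<open>vdesc\<close> names one of these relative to the current literal variable \<open>x\<close> and position \<open>c\<close>.\<close>

definition var_code :: "nat \<Rightarrow> nat \<Rightarrow> nat" where "var_code kd p = kd + 8*p"

datatype vdesc = DZ | DP | DQ | DD bool | DE bool

fun vdesc_code :: "nat \<Rightarrow> nat \<Rightarrow> vdesc \<Rightarrow> nat" where
  "vdesc_code x c DZ = var_code 0 1"
| "vdesc_code x c DP = var_code 1 (x+1)"
| "vdesc_code x c DQ = var_code 2 (x+1)"
| "vdesc_code x c (DD b) = var_code 3 (c + (if b then 1 else 0))"
| "vdesc_code x c (DE b) = var_code 4 (c + (if b then 1 else 0))"

definition lit_vdesc :: "bool \<Rightarrow> vdesc" where "lit_vdesc pol = (if pol then DP else DQ)"

definition mid_triple :: "bool \<Rightarrow> bool \<Rightarrow> vdesc \<times> vdesc \<times> vdesc" where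
  "mid_triple f pol = (if f then (DE True, lit_vdesc pol, DZ) else (DD False, lit_vdesc pol, DE True))"

definition lit_triples :: "bool \<Rightarrow> bool \<Rightarrow> (vdesc \<times> vdesc \<times> vdesc) list" where
  "lit_triples f pol = [(DP,DQ,DQ), mid_triple f pol, (DD True, DE True, DE True)]"

definition triple_codes :: "nat \<Rightarrow> nat \<Rightarrow> vdesc \<times> vdesc \<times> vdesc \<Rightarrow> nat \<times> nat \<times> nat" where
  "triple_codes x c t = (vdesc_code x c (fst t), vdesc_code x c (fst (snd t)), vdesc_code x c (snd (snd t)))"

text \<open>The flag is set for the first literal of a clause; the literal at position \<open>c + 1\<close>
  contributes the triples \<open>(x, \<not>x, \<not>x)\<close>, \<open>(\<not>d\<^sub>c\<^sub>+\<^sub>1, \<ell>, z)\<close> resp. \<open>(d\<^sub>c, \<ell>, \<not>d\<^sub>c\<^sub>+\<^sub>1)\<close> and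
  \<open>(d\<^sub>c\<^sub>+\<^sub>1, \<not>d\<^sub>c\<^sub>+\<^sub>1, \<not>d\<^sub>c\<^sub>+\<^sub>1)\<close>.\<close>
fun lits_triples :: "bool \<Rightarrow> nat \<Rightarrow> lit list \<Rightarrow> (nat \<times> nat \<times> nat) list" where
  "lits_triples f c [] = []"
| "lits_triples f c (l#ls) = map (triple_codes (snd l) c) (lit_triples f (fst l)) @ lits_triples False (Suc c) ls"

definition clause_end_triple :: "lit list \<Rightarrow> vdesc \<times> vdesc \<times> vdesc" where
  "clause_end_triple C = (if C = [] then (DZ,DZ,DZ) else (DD False, DZ, DZ))"

fun cnf_triples :: "nat \<Rightarrow> cnf \<Rightarrow> (nat \<times> nat \<times> nat) list" where
  "cnf_triples c [] = []"
| "cnf_triples c (C#F) = lits_triples True c C @ [triple_codes 0 (c + length C) (clause_end_triple C)] @ cnf_triples (c + length C) F"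

definition nae3 :: "(nat \<Rightarrow> bool) \<Rightarrow> nat \<times> nat \<times> nat \<Rightarrow> bool" where
  "nae3 s t = (\<not> (s (fst t) = s (fst (snd t)) \<and> s (fst (snd t)) = s (snd (snd t))))"

definition lit_sat :: "(nat \<Rightarrow> bool) \<Rightarrow> lit \<Rightarrow> bool" where
  "lit_sat \<sigma> l = (\<sigma> (snd l) = fst l)"

definition induced_assignment :: "(nat \<Rightarrow> bool) \<Rightarrow> (nat \<Rightarrow> bool) \<Rightarrow> nat \<Rightarrow> bool" where
  "induced_assignment \<sigma> D n = (if n mod 8 = 0 then False else if n mod 8 = 1 then \<sigma> (n div 8 - 1)
      else if n mod 8 = 2 then \<not> \<sigma> (n div 8 - 1) else if n mod 8 = 3 then D (n div 8)
      else \<not> D (n div 8))"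

lemma induced_assignment_var_code[simp]: "kd < 8 \<Longrightarrow> induced_assignment \<sigma> D (var_code kd p) = (if kd =
    0 then False else if kd = 1 then \<sigma> (p - 1)
   else if kd = 2 then \<not> \<sigma> (p - 1) else if kd = 3 then D p else \<not> D p)"
proof -
  assume "kd < 8"
  then have "(kd + 8*p) mod 8 = kd" "(kd + 8*p) div 8 = p" by auto
  then show ?thesis unfolding induced_assignment_def var_code_def by (simp only:)
qed

lemma induced_assignment_lit_vdesc[simp]: "induced_assignment \<sigma> D (vdesc_code x c (lit_vdesc pol)) = lit_sat \<sigma> (pol, x)"
  by (cases pol) (auto simp: lit_vdesc_def lit_sat_def)

lemma lits_triples_nae3:
  "(\<forall>m < length ls. D (c+1+m) = ((\<not> f \<and> D c) \<or> (\<exists>l\<in>set (take (m+1) ls). lit_sat \<sigma> l))) \<Longrightarrow>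
   \<forall>t \<in> set (lits_triples f c ls). nae3 (induced_assignment \<sigma> D) t"
proof (induction ls arbitrary: f c)
  case Nil then show ?case by simp
next
  case (Cons l ls)
  obtain pol x where l: "l = (pol, x)" by (cases l)
  have D1: "D (c+1) = ((\<not> f \<and> D c) \<or> lit_sat \<sigma> l)" using Cons.prems[rule_format, of 0] by simp
  have IH: "\<forall>t \<in> set (lits_triples False (Suc c) ls). nae3 (induced_assignment \<sigma> D) t"
  proof (rule Cons.IH, intro allI impI)
    fix m assume "m < length ls"
    then have "D (c+1+(Suc m)) = ((\<not> f \<and> D c) \<or> (\<exists>l'\<in>set (take (Suc m+1) (l#ls)). lit_sat \<sigma> l'))"
      using Cons.prems by auto
    then show "D (Suc c + 1 + m) = ((\<not> False \<and> D (Suc c)) \<or> (\<exists>l\<in>set (take (m + 1) ls). lit_sat \<sigma> l))"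
      using D1 by auto
  qed
  have H: "\<forall>t\<in>set (map (triple_codes x c) (lit_triples f pol)). nae3 (induced_assignment \<sigma> D) t"
    using D1 l by (cases f; simp add: lit_triples_def mid_triple_def triple_codes_def nae3_def; blast)
  show ?case unfolding l lits_triples.simps fst_conv snd_conv set_append ball_Un using H IH by blast
qed

fun prefix_sat :: "(nat \<Rightarrow> bool) \<Rightarrow> nat \<Rightarrow> cnf \<Rightarrow> nat \<Rightarrow> bool" where
  "prefix_sat \<sigma> c [] i = False"
| "prefix_sat \<sigma> c (C#F) i = (if c < i \<and> i \<le> c + length C then (\<exists>l\<in>set (take (i-c) C). lit_sat \<sigma> l)
      else prefix_sat \<sigma> (c + length C) F i)"

lemma cnf_triples_nae3:
  "(\<forall>C\<in>set I. \<exists>l\<in>set C. lit_sat \<sigma> l) \<Longrightarrow> (\<forall>i. c < i \<longrightarrow> D i = prefix_sat \<sigma> c I i) \<Longrightarrow>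
   \<forall>t \<in> set (cnf_triples c I). nae3 (induced_assignment \<sigma> D) t"
proof (induction I arbitrary: c)
  case Nil then show ?case by simp
next
  case (Cons C F)
  have A: "\<forall>t \<in> set (lits_triples True c C). nae3 (induced_assignment \<sigma> D) t"
  proof (rule lits_triples_nae3, intro allI impI)
    fix m assume "m < length C"
    then show "D (c + 1 + m) = ((\<not> True \<and> D c) \<or> (\<exists>l\<in>set (take (m + 1) C). lit_sat \<sigma> l))"
      using Cons.prems(2)[rule_format, of "c+1+m"] by simp
  qed
  have B: "\<forall>t \<in> set (cnf_triples (c + length C) F). nae3 (induced_assignment \<sigma> D) t"
  proof (rule Cons.IH)
    show "\<forall>C\<in>set F. \<exists>l\<in>set C. lit_sat \<sigma> l" using Cons.prems(1) by simp
    show "\<forall>i. c + length C < i \<longrightarrow> D i = prefix_sat \<sigma> (c + length C) F i"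
      using Cons.prems(2) by auto
  qed
  have C: "C \<noteq> []" using Cons.prems(1) by auto
  have E: "D (c + length C) = True"
    using Cons.prems(1) Cons.prems(2)[rule_format, of "c + length C"] C by auto
  have E': "nae3 (induced_assignment \<sigma> D) (triple_codes 0 (c + length C) (clause_end_triple C))"
    using C E by (simp add: clause_end_triple_def triple_codes_def nae3_def)
  show ?case unfolding cnf_triples.simps set_append ball_Un using A B E' by simp
qed

lemma cnf_sat_imp_triples_nae3:
  assumes "cnf_sat I" shows "\<exists>s. \<forall>t \<in> set (cnf_triples 1 I). nae3 s t"
proof -
  obtain \<sigma> where s: "\<forall>C \<in> set I. \<exists>(b, v) \<in> set C. \<sigma> v = b" using assms cnf_sat_def by auto
  have "\<forall>C\<in>set I. \<exists>l\<in>set C. lit_sat \<sigma> l" using s by (force simp: lit_sat_def)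
  then show ?thesis using cnf_triples_nae3[of I \<sigma> 1 "prefix_sat \<sigma> 1 I"] by blast
qed

lemma lits_triples_sound:
  "ls \<noteq> [] \<Longrightarrow> \<forall>t \<in> set (lits_triples f c ls). nae3 s t \<Longrightarrow> s (var_code 0 1) = False \<Longrightarrow>
   s (var_code 3 (c + length ls)) \<Longrightarrow>
   (\<exists>l\<in>set ls. lit_sat (\<lambda>x. s (var_code 1 (x+1))) l) \<or> (\<not> f \<and> s (var_code 3 c))"
proof (induction ls arbitrary: f c)
  case Nil then show ?case by simp
next
  case (Cons l ls)
  obtain pol x where l: "l = (pol, x)" by (cases l)
  have T: "nae3 s t" if "t \<in> set (map (triple_codes x c) (lit_triples f pol))" for t
    using Cons.prems(2) that unfolding l lits_triples.simps fst_conv snd_conv set_append ball_Un by blast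
  have t1: "s (var_code 2 (x+1)) = (\<not> s (var_code 1 (x+1)))"
    using T[of "triple_codes x c (DP,DQ,DQ)"] by (simp add: lit_triples_def mid_triple_def triple_codes_def nae3_def)
  have t3: "s (var_code 4 (c+1)) = (\<not> s (var_code 3 (c+1)))"
    using T[of "triple_codes x c (DD True, DE True, DE True)"] by (simp add: lit_triples_def mid_triple_def triple_codes_def nae3_def)
  have t2: "s (var_code 3 (c+1)) \<Longrightarrow> lit_sat (\<lambda>x. s (var_code 1 (x+1))) l \<or> (\<not> f \<and> s (var_code 3 c))"
    using T[of "triple_codes x c (mid_triple f pol)"]
      t1 t3 Cons.prems(3) l
    by (cases f; cases pol; simp add: lit_triples_def mid_triple_def triple_codes_def nae3_def lit_vdesc_def lit_sat_def; blast)
  show ?case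
  proof (cases "ls = []")
    case True
    then show ?thesis using t2 Cons.prems(4) by auto
  next
    case False
    have "(\<exists>l\<in>set ls. lit_sat (\<lambda>x. s (var_code 1 (x+1))) l) \<or> (\<not> False \<and> s (var_code 3 (Suc c)))"
      using Cons.IH[OF False, of False "Suc c"] Cons.prems l by auto
    then show ?thesis using t2 by auto
  qed
qed

lemma cnf_triples_sound:
  "\<forall>t \<in> set (cnf_triples c I). nae3 s t \<Longrightarrow> s (var_code 0 1) = False \<Longrightarrow>
   \<forall>C\<in>set I. \<exists>l\<in>set C. lit_sat (\<lambda>x. s (var_code 1 (x+1))) l"
proof (induction I arbitrary: c)
  case Nil then show ?case by simp
next
  case (Cons C F)
  have E: "nae3 s (triple_codes 0 (c + length C) (clause_end_triple C))" using Cons.prems(1)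
    unfolding cnf_triples.simps set_append ball_Un by simp
  have CN: "C \<noteq> []" using E by (auto simp: clause_end_triple_def triple_codes_def nae3_def)
  have "s (var_code 3 (c + length C))" using E CN Cons.prems(2) by (auto simp: clause_end_triple_def triple_codes_def nae3_def)
  then have "\<exists>l\<in>set C. lit_sat (\<lambda>x. s (var_code 1 (x+1))) l"
    using lits_triples_sound[OF CN, of True c s] Cons.prems
    unfolding cnf_triples.simps set_append ball_Un by simp
  moreover have "\<forall>t \<in> set (cnf_triples (c + length C) F). nae3 s t" using Cons.prems(1)
    unfolding cnf_triples.simps set_append ball_Un by simp
  ultimately show ?case using Cons.IH[of "c + length C"] Cons.prems(2) by simp
qed

lemma triples_nae3_imp_cnf_sat:
  assumes "\<forall>t \<in> set (cnf_triples 1 I). nae3 s t" shows "cnf_sat I"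
proof -
  define s' where "s' = (if s (var_code 0 1) then (\<lambda>n. \<not> s n) else s)"
  have "\<forall>t \<in> set (cnf_triples 1 I). nae3 s' t" using assms unfolding s'_def nae3_def by (cases "s (var_code 0 1)") auto
  moreover have "s' (var_code 0 1) = False" by (simp add: s'_def)
  ultimately have L: "\<forall>C\<in>set I. \<exists>l\<in>set C. lit_sat (\<lambda>x. s' (var_code 1 (x+1))) l"
    by (rule cnf_triples_sound)
  show ?thesis unfolding cnf_sat_def
  proof (intro exI ballI)
    fix C assume "C \<in> set I"
    then obtain l where l: "l \<in> set C" "lit_sat (\<lambda>x. s' (var_code 1 (x+1))) l" using L by blast
    obtain b v where "l = (b, v)" by (cases l)
    then show "\<exists>(b, v)\<in>set C. s' (var_code 1 (v+1)) = b" using l by (auto simp: lit_sat_def)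
  qed
qed

section \<open>Amplification\<close>

definition ncopies :: "nat \<Rightarrow> nat" where "ncopies k = 2*k+1"
definition copy_sets :: "nat \<Rightarrow> nat list list" where
  "copy_sets k = filter (sorted_wrt (<)) (List.n_lists (k+1) [0..<ncopies k])"
definition copy_choices :: "nat \<Rightarrow> nat list list" where
  "copy_choices k = concat (map (\<lambda>A. concat (map (\<lambda>B. map (\<lambda>C. A @ B @ C) (copy_sets k)) (copy_sets k))) (copy_sets k))"
definition width :: "nat \<Rightarrow> nat" where "width k = 3*(k+1)"

text \<open>The copy index occupies the low bits, so the binary name of a copy is the index followed
  by the name of the variable.\<close>

definition copy_var :: "nat \<Rightarrow> nat \<Rightarrow> nat \<Rightarrow> nat" where "copy_var k j v = j + 2^(ncopies k) * v"

definition triple_nth :: "'a \<times> 'a \<times> 'a \<Rightarrow> nat \<Rightarrow> 'a" where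
  "triple_nth t i = [fst t, fst (snd t), snd (snd t)] ! i"

definition amplify :: "nat \<Rightarrow> nat \<times> nat \<times> nat \<Rightarrow> nae" where
  "amplify k t = map (\<lambda>J. map (\<lambda>q. copy_var k (J!q) (triple_nth t (q div (k+1)))) [0..<width k]) (copy_choices k)"

lemma copy_sets_iff: "A \<in> set (copy_sets k) \<longleftrightarrow> length A = k+1 \<and> set A \<subseteq> {..<ncopies k} \<and> sorted_wrt (<) A"
  unfolding copy_sets_def set_filter set_n_lists by auto

lemma copy_sets_obtain:
  assumes "S \<subseteq> {..<ncopies k}" "k+1 \<le> card S"
  shows "\<exists>A\<in>set (copy_sets k). set A \<subseteq> S"
proof -
  have fS: "finite S" using assms(1) finite_subset by blast
  obtain T where T: "T \<subseteq> S" "card T = k+1" using obtain_subset_with_card_n[OF assms(2)] by blast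
  have fT: "finite T" using T(1) fS finite_subset by blast
  define A where "A = sorted_list_of_set T"
  have "set A = T" using fT by (simp add: A_def)
  moreover have "length A = k+1" using fT T(2) by (simp add: A_def)
  moreover have "sorted_wrt (<) A" by (simp add: A_def)
  ultimately show ?thesis using T(1) assms(1) by (auto simp: copy_sets_iff)
qed

lemma copy_choices_iff: "J \<in> set (copy_choices k) \<longleftrightarrow> (\<exists>A\<in>set (copy_sets k). \<exists>B\<in>set (copy_sets k). \<exists>C\<in>set (copy_sets k). J = A @ B @ C)"
  by (auto simp: copy_choices_def)

lemma amplify_clause_split:
  assumes "length A = k+1" "length B = k+1" "length C = k+1"
  shows "map (\<lambda>q. copy_var k ((A@B@C)!q) (triple_nth (a,b,c) (q div (k+1)))) [0..<width k]
       = map (\<lambda>j. copy_var k j a) A @ map (\<lambda>j. copy_var k j b) B @ map (\<lambda>j. copy_var k j c) C"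
proof (rule nth_equalityI)
  show "length (map (\<lambda>q. copy_var k ((A@B@C)!q) (triple_nth (a,b,c) (q div (k+1)))) [0..<width k]) =
        length (map (\<lambda>j. copy_var k j a) A @ map (\<lambda>j. copy_var k j b) B @ map (\<lambda>j. copy_var k j c) C)"
    using assms by (simp add: width_def)
  fix q assume "q < length (map (\<lambda>q. copy_var k ((A@B@C)!q) (triple_nth (a,b,c) (q div (k+1)))) [0..<width k])"
  then have q: "q < 3*(k+1)" by (simp add: width_def)
  consider "q < k+1" | "k+1 \<le> q" "q < 2*(k+1)" | "2*(k+1) \<le> q" by linarith
  then show "map (\<lambda>q. copy_var k ((A@B@C)!q) (triple_nth (a,b,c) (q div (k+1)))) [0..<width k] ! q =
        (map (\<lambda>j. copy_var k j a) A @ map (\<lambda>j. copy_var k j b) B @ map (\<lambda>j. copy_var k j c) C) ! q"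
  proof cases
    case 1
    then show ?thesis using q assms by (simp add: width_def nth_append triple_nth_def)
  next
    case 2
    then have d: "q div (k+1) = 1" by (simp add: div_nat_eqI)
    have "q - (k+1) < k+1" using 2 by simp
    then show ?thesis using 2 q assms d by (simp add: width_def nth_append triple_nth_def)
  next
    case 3
    then have d: "q div (k+1) = 2" using q by (simp add: div_nat_eqI)
    have "q - (k+1) - (k+1) < k+1" "\<not> q - (k+1) < k+1" using 3 q by auto
    then show ?thesis using 3 q assms d by (simp add: width_def nth_append triple_nth_def)
  qed
qed

lemma amplify_iff:
  "cl \<in> set (amplify k (a,b,c)) \<longleftrightarrow> (\<exists>A\<in>set (copy_sets k). \<exists>B\<in>set (copy_sets k). \<exists>C\<in>set (copy_sets k).
      cl = map (\<lambda>j. copy_var k j a) A @ map (\<lambda>j. copy_var k j b) B @ map (\<lambda>j. copy_var k j c) C)"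
proof -
  have "cl \<in> set (amplify k (a,b,c)) \<longleftrightarrow> (\<exists>J\<in>set (copy_choices k). cl = map (\<lambda>q. copy_var k (J!q)
      (triple_nth (a,b,c) (q div (k+1)))) [0..<width k])"
    by (auto simp: amplify_def)
  also have "\<dots> \<longleftrightarrow> (\<exists>A\<in>set (copy_sets k). \<exists>B\<in>set (copy_sets k). \<exists>C\<in>set (copy_sets k).
      cl = map (\<lambda>j. copy_var k j a) A @ map (\<lambda>j. copy_var k j b) B @ map (\<lambda>j. copy_var k j c) C)"
  proof
    assume "\<exists>J\<in>set (copy_choices k). cl = map (\<lambda>q. copy_var k (J!q) (triple_nth (a,b,c) (q div (k+1)))) [0..<width k]"
    then obtain J where J: "J\<in>set (copy_choices k)" "cl = map (\<lambda>q. copy_var k (J!q) (triple_nth (a,b,c) (q div (k+1)))) [0..<width k]"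
      by blast
    from J(1) obtain A B C where ABC: "A\<in>set (copy_sets k)" "B\<in>set (copy_sets k)" "C\<in>set (copy_sets k)" "J = A@B@C"
      unfolding copy_choices_iff by blast
    from J(2) ABC(4) have "cl = map (\<lambda>q. copy_var k ((A@B@C)!q) (triple_nth (a,b,c) (q div (k+1)))) [0..<width k]"
      by simp
    moreover have "length A = k+1" "length B = k+1" "length C = k+1" using ABC by (auto simp: copy_sets_iff)
    ultimately have "cl = map (\<lambda>j. copy_var k j a) A @ map (\<lambda>j. copy_var k j b) B @ map (\<lambda>j. copy_var k j c) C"
      using amplify_clause_split[of A k B C a b c] by simp
    then show "\<exists>A\<in>set (copy_sets k). \<exists>B\<in>set (copy_sets k). \<exists>C\<in>set (copy_sets k).
      cl = map (\<lambda>j. copy_var k j a) A @ map (\<lambda>j. copy_var k j b) B @ map (\<lambda>j. copy_var k j c) C"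
      using ABC by blast
  next
    assume "\<exists>A\<in>set (copy_sets k). \<exists>B\<in>set (copy_sets k). \<exists>C\<in>set (copy_sets k).
      cl = map (\<lambda>j. copy_var k j a) A @ map (\<lambda>j. copy_var k j b) B @ map (\<lambda>j. copy_var k j c) C"
    then obtain A B C where ABC: "A\<in>set (copy_sets k)" "B\<in>set (copy_sets k)" "C\<in>set (copy_sets k)"
       and "cl = map (\<lambda>j. copy_var k j a) A @ map (\<lambda>j. copy_var k j b) B @ map (\<lambda>j. copy_var k j c) C"
      by blast
    moreover have "A@B@C \<in> set (copy_choices k)" using ABC unfolding copy_choices_iff by blast
    moreover have "length A = k+1" "length B = k+1" "length C = k+1" using ABC by (auto simp: copy_sets_iff)
    ultimately have "A@B@C \<in> set (copy_choices k)" "cl = map (\<lambda>q. copy_var k ((A@B@C)!q) (triple_nth (a,b,c) (q div (k+1)))) [0..<width k]"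
      using amplify_clause_split[of A k B C a b c] by simp_all
    then show "\<exists>J\<in>set (copy_choices k). cl = map (\<lambda>q. copy_var k (J!q) (triple_nth (a,b,c) (q div (k+1)))) [0..<width k]"
      by blast
  qed
  finally show ?thesis .
qed

lemma amplify_length: "cl \<in> set (amplify k t) \<Longrightarrow> length cl = 3*k+3"
  by (auto simp: amplify_def width_def)

lemma ncopies_less_pow: "j < ncopies k \<Longrightarrow> j < 2 ^ ncopies k"
  using less_exp less_trans by blast

lemma copy_var_div: "j < ncopies k \<Longrightarrow> copy_var k j v div 2 ^ ncopies k = v"
  using ncopies_less_pow[of j k] by (simp add: copy_var_def)

definition majority :: "nat \<Rightarrow> (nat \<Rightarrow> bool) \<Rightarrow> nat \<Rightarrow> bool" where
  "majority k \<alpha> v = (k+1 \<le> card {j \<in> {..<ncopies k}. \<alpha> (copy_var k j v)})"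

lemma majority_copy_set: "\<exists>A\<in>set (copy_sets k). \<forall>j\<in>set A. \<alpha> (copy_var k j v) = majority k \<alpha> v"
proof (cases "majority k \<alpha> v")
  case True
  then obtain A where "A\<in>set (copy_sets k)" "set A \<subseteq> {j \<in> {..<ncopies k}. \<alpha> (copy_var k j v)}"
    using copy_sets_obtain[of "{j \<in> {..<ncopies k}. \<alpha> (copy_var k j v)}" k] by (auto simp: majority_def)
  then show ?thesis using True by auto
next
  case False
  let ?S = "{j \<in> {..<ncopies k}. \<alpha> (copy_var k j v)}"
  let ?S' = "{j \<in> {..<ncopies k}. \<not> \<alpha> (copy_var k j v)}"
  have "card ?S + card ?S' = ncopies k"
  proof -
    have "card (?S \<union> ?S') = card ?S + card ?S'" by (rule card_Un_disjoint) auto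
    moreover have "?S \<union> ?S' = {..<ncopies k}" by auto
    ultimately show ?thesis by simp
  qed
  then have "k+1 \<le> card ?S'" using False by (simp add: majority_def ncopies_def)
  then obtain A where "A\<in>set (copy_sets k)" "set A \<subseteq> ?S'"
    using copy_sets_obtain[of ?S' k] by auto
  then show ?thesis using False by auto
qed

lemma amplify_sat_imp_majority_nae3:
  assumes "nae_sat_by (concat (map (amplify k) T)) \<alpha>"
  shows "\<forall>t\<in>set T. nae3 (majority k \<alpha>) t"
proof
  fix t assume tT: "t \<in> set T"
  obtain a b c where t: "t = (a,b,c)" by (cases t) auto
  show "nae3 (majority k \<alpha>) t"
  proof (rule ccontr)
    assume "\<not> nae3 (majority k \<alpha>) t"
    then have e: "majority k \<alpha> b = majority k \<alpha> a" "majority k \<alpha> c = majority k \<alpha> a" using t by (auto simp: nae3_def)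
    obtain A where A: "A\<in>set (copy_sets k)" "\<forall>j\<in>set A. \<alpha> (copy_var k j a) = majority k \<alpha> a" using majority_copy_set by blast
    obtain B where B: "B\<in>set (copy_sets k)" "\<forall>j\<in>set B. \<alpha> (copy_var k j b) = majority k \<alpha> a" using majority_copy_set e by metis
    obtain C where C: "C\<in>set (copy_sets k)" "\<forall>j\<in>set C. \<alpha> (copy_var k j c) = majority k \<alpha> a" using majority_copy_set e by metis
    let ?cl = "map (\<lambda>j. copy_var k j a) A @ map (\<lambda>j. copy_var k j b) B @ map (\<lambda>j. copy_var k j c) C"
    have "?cl \<in> set (amplify k (a,b,c))" using A B C amplify_iff by blast
    then have "?cl \<in> set (concat (map (amplify k) T))" unfolding set_concat set_map using tT t by blast
    then have "(\<exists>x \<in> set ?cl. \<alpha> x) \<and> (\<exists>x \<in> set ?cl. \<not> \<alpha> x)" using assms unfolding nae_sat_by_def by blast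
    then show False using A B C by auto
  qed
qed

lemma copy_set_avoids:
  assumes "A \<in> set (copy_sets k)" "finite Y" "card Y \<le> k"
  shows "\<exists>j\<in>set A. copy_var k j v \<notin> Y \<and> j < ncopies k"
proof (rule ccontr)
  assume "\<not> ?thesis"
  then have sub: "(\<lambda>j. copy_var k j v) ` set A \<subseteq> Y"
    using assms(1) by (auto simp: copy_sets_iff)
  have inj: "inj_on (\<lambda>j. copy_var k j v) (set A)" by (rule inj_onI) (simp add: copy_var_def)
  have "distinct A" using assms(1) by (auto simp: copy_sets_iff strict_sorted_iff)
  then have "card (set A) = k+1" using assms(1) by (simp add: copy_sets_iff distinct_card)
  then have "card ((\<lambda>j. copy_var k j v) ` set A) = k+1" using card_image[OF inj] by simp
  then have "k+1 \<le> card Y" using card_mono[OF assms(2) sub] by simp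
  then show False using assms(3) by simp
qed

lemma amplify_sat_extend:
  assumes "\<forall>t\<in>set T. nae3 s t" "finite Y" "card Y \<le> k"
  shows "nae_sat_by (concat (map (amplify k) T)) (\<lambda>n. if n \<in> Y then p n else s (n div 2 ^ ncopies k))"
  unfolding nae_sat_by_def
proof
  fix cl assume "cl \<in> set (concat (map (amplify k) T))"
  then obtain t where tT: "t \<in> set T" and cl: "cl \<in> set (amplify k t)" by auto
  obtain a b c where t: "t = (a,b,c)" by (cases t) auto
  obtain A B C where A: "A\<in>set (copy_sets k)" and B: "B\<in>set (copy_sets k)" and C: "C\<in>set (copy_sets k)" and
    cl': "cl = map (\<lambda>j. copy_var k j a) A @ map (\<lambda>j. copy_var k j b) B @ map (\<lambda>j. copy_var k j c) C"
    using cl t amplify_iff by blast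
  let ?a = "\<lambda>n. if n \<in> Y then p n else s (n div 2 ^ ncopies k)"
  obtain ja where ja: "ja\<in>set A" "copy_var k ja a \<notin> Y" "ja < ncopies k" using copy_set_avoids[OF A assms(2,3)] by blast
  obtain jb where jb: "jb\<in>set B" "copy_var k jb b \<notin> Y" "jb < ncopies k" using copy_set_avoids[OF B assms(2,3)] by blast
  obtain jc where jc: "jc\<in>set C" "copy_var k jc c \<notin> Y" "jc < ncopies k" using copy_set_avoids[OF C assms(2,3)] by blast
  have va: "?a (copy_var k ja a) = s a" using ja by (simp add: copy_var_div)
  have vb: "?a (copy_var k jb b) = s b" using jb by (simp add: copy_var_div)
  have vc: "?a (copy_var k jc c) = s c" using jc by (simp add: copy_var_div)
  have m: "copy_var k ja a \<in> set cl" "copy_var k jb b \<in> set cl" "copy_var k jc c \<in> set cl"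
    using cl' ja jb jc by auto
  have "nae3 s t" using assms(1) tT by auto
  then have "\<not> (s a = s b \<and> s b = s c)" using t by (simp add: nae3_def)
  then show "(\<exists>x\<in>set cl. ?a x) \<and> (\<exists>x\<in>set cl. \<not> ?a x)"
    using m va vb vc by (cases "s a"; cases "s b"; cases "s c") metis+
qed

lemma amplify_robust:
  assumes "\<forall>t\<in>set T. nae3 s t" "k > 0"
  shows "robust_nae_sat k (concat (map (amplify k) T))"
  unfolding robust_nae_sat_def
proof (intro allI impI)
  fix Y p assume H: "Y \<subseteq> nae_vars (concat (map (amplify k) T)) \<and> card Y = k \<and> loc_compat (concat (map (amplify k) T)) Y p"
  then have "finite Y" using assms(2) card_ge_0_finite by auto
  then show "\<exists>a. nae_sat_by (concat (map (amplify k) T)) a \<and> (\<forall>y\<in>Y. a y = p y)"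
    using amplify_sat_extend[OF assms(1), of Y k p] H by auto
qed

lemma amplify_sat:
  assumes "\<forall>t\<in>set T. nae3 s t"
  shows "nae_sat (concat (map (amplify k) T))"
  using amplify_sat_extend[OF assms, of "{}" k "\<lambda>_. False"] unfolding nae_sat_def by auto

definition reduction :: "nat \<Rightarrow> cnf \<Rightarrow> nae" where
  "reduction k I = concat (map (amplify k) (cnf_triples 1 I))"

definition bit_sym :: "bool \<Rightarrow> sym" where "bit_sym b = (if b then S1 else S0)"

declare bin.simps[simp del]

lemma bin_less_2: "n < 2 \<Longrightarrow> bin n = [if n = 0 then S0 else S1]"
  by (subst bin.simps[of n]) simp
lemma bin_ge_2: "2 \<le> n \<Longrightarrow> bin n = (if n mod 2 = 0 then S0 else S1) # bin (n div 2)"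
  by (subst bin.simps[of n]) simp

lemma bin_not_Nil[simp]: "bin n \<noteq> []"
  by (cases "n < 2") (auto simp: bin_less_2 bin_ge_2)

lemma set_bin: "set (bin n) \<subseteq> {S0, S1}"
proof (induction n rule: bin.induct)
  case (1 n) then show ?case by (cases "n < 2") (auto simp: bin_less_2 bin_ge_2)
qed

fun incr_bits :: "bool \<Rightarrow> sym list \<Rightarrow> sym list" where
  "incr_bits c [] = (if c then [S1] else [])"
| "incr_bits c (d#ds) = bit_sym ((d = S1) \<noteq> c) # incr_bits (c \<and> d = S1) ds"

lemma incr_bits_False: "set ds \<subseteq> {S0, S1} \<Longrightarrow> incr_bits False ds = ds"
  by (induction ds) (auto simp: bit_sym_def)

lemma incr_bits_bin: "incr_bits True (bin n) = bin (Suc n)"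
proof (induction n rule: bin.induct)
  case (1 n)
  show ?case
  proof (cases "n < 2")
    case True
    then have "n = 0 \<or> n = 1" by auto
    then show ?thesis by (auto simp: bin_less_2 bin_ge_2 bit_sym_def)
  next
    case False
    then have IH: "incr_bits True (bin (n div 2)) = bin (Suc (n div 2))" using 1 by simp
    show ?thesis
    proof (cases "n mod 2 = 0")
      case True
      then have "Suc n div 2 = n div 2" "Suc n mod 2 = 1" by presburger+
      then show ?thesis using False True
        by (simp add: bin_ge_2[of n] bin_ge_2[of "Suc n"] bit_sym_def incr_bits_False set_bin)
    next
      case F2: False
      then have "Suc n div 2 = Suc (n div 2)" "Suc n mod 2 = 0" by presburger+
      then show ?thesis using False F2 IH
        by (simp add: bin_ge_2[of n] bin_ge_2[of "Suc n"] bit_sym_def)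
    qed
  qed
qed

fun low_bits :: "nat \<Rightarrow> nat \<Rightarrow> sym list" where
  "low_bits 0 j = []"
| "low_bits (Suc n) j = bit_sym (odd j) # low_bits n (j div 2)"

lemma low_bits_eq_map: "low_bits n j = map (\<lambda>b. bit_sym (odd (j div 2^b))) [0..<n]"
proof (induction n arbitrary: j)
  case 0 then show ?case by simp
next
  case (Suc n)
  have "map (\<lambda>b. bit_sym (odd (j div 2^b))) [0..<Suc n] = bit_sym (odd j) # map (\<lambda>b. bit_sym (odd (j div 2^Suc b))) [0..<n]"
    by (simp add: map_upt_Suc del: upt_Suc)
  also have "\<dots> = bit_sym (odd j) # map (\<lambda>b. bit_sym (odd ((j div 2) div 2^b))) [0..<n]"
    by (simp add: div_mult2_eq)
  finally show ?case using Suc by simp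
qed

lemma bin_add_pow: "j < 2^n \<Longrightarrow> 0 < m \<Longrightarrow> bin (j + 2^n * m) = low_bits n j @ bin m"
proof (induction n arbitrary: j)
  case 0 then show ?case by simp
next
  case (Suc n)
  have "2^Suc n * 1 \<le> 2^Suc n * m" using Suc.prems(2) by (intro mult_le_mono2) simp
  moreover have "(2::nat) \<le> 2^Suc n" by simp
  ultimately have ge: "2 \<le> j + 2^Suc n * m" by linarith
  have d: "(j + 2^Suc n * m) div 2 = j div 2 + 2^n * m" by simp
  have md: "(j + 2^Suc n * m) mod 2 = j mod 2" by (simp add: mult.assoc)
  have "j div 2 < 2^n" using Suc.prems(1) by (simp add: less_mult_imp_div_less)
  then have IH: "bin (j div 2 + 2^n * m) = low_bits n (j div 2) @ bin m" using Suc.IH Suc.prems(2) by blast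
  have b: "bin (j + 2^Suc n * m) = (if (j + 2^Suc n * m) mod 2 = 0 then S0 else S1) # bin ((j + 2^Suc n * m) div 2)"
    by (rule bin_ge_2[OF ge])
  show ?case unfolding b d md IH by (simp add: bit_sym_def odd_iff_mod_2_eq_one)
qed

lemma length_bin: "length (bin n) = floor_log n + 1"
proof (induction n rule: bin.induct)
  case (1 n)
  show ?case
  proof (cases "n < 2")
    case True
    then have "n = 0 \<or> n = 1" by auto
    then have "floor_log n = 0" by auto
    then show ?thesis using True by (simp add: bin_less_2)
  next
    case False
    then have a: "bin n = (if n mod 2 = 0 then S0 else S1) # bin (n div 2)" by (intro bin_ge_2) simp
    have b: "floor_log n = Suc (floor_log (n div 2))" using False by (intro floor_log_rec) simp
    have "length (bin (n div 2)) = floor_log (n div 2) + 1" using 1 False by blast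
    then show ?thesis unfolding a b by simp
  qed
qed

lemma incr_bits_replicate: "incr_bits True (replicate i S1 @ r) = replicate i S0 @ incr_bits True r"
  by (induction i) (auto simp: bit_sym_def)

lemma take_eq_replicate: "(\<forall>j<i. l ! j = S1) \<Longrightarrow> i \<le> length l \<Longrightarrow> take i l = replicate i S1"
  by (rule nth_equalityI) auto

lemma length_incr_bits: "length l \<le> length (incr_bits c l)"
  by (induction l arbitrary: c) auto

lemma incr_bits_all_ones:
  "\<forall>j<length l. l ! j = S1 \<Longrightarrow> incr_bits True l = replicate (length l) S0 @ [S1]"
  using incr_bits_replicate[of "length l" "[]"] take_eq_replicate[of "length l" l] by simp

lemma replicate_drop_update_S0:
  "i < length l \<Longrightarrow> (replicate i S0 @ drop i l)[i := S0] = replicate (Suc i) S0 @ drop (Suc i) l"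
  by (simp add: list_update_append Cons_nth_drop_Suc[symmetric] replicate_append_same)

lemma incr_bits_first_zero:
  assumes "set l \<subseteq> {S0, S1}" "i < length l" "\<forall>j<i. l ! j = S1" "l ! i = S0"
  shows "incr_bits True l = (replicate i S0 @ drop i l)[i := S1]"
proof -
  define r where "r = drop (Suc i) l"
  have "drop i l = S0 # r" using assms(2,4) unfolding r_def by (simp add: Cons_nth_drop_Suc[symmetric])
  then have l: "l = replicate i S1 @ S0 # r"
    using take_eq_replicate[of i l] assms(2,3) append_take_drop_id[of i l] by simp
  have "set r \<subseteq> {S0, S1}" using assms(1) unfolding r_def by (meson set_drop_subset subset_trans)
  then have "incr_bits True l = replicate i S0 @ S1 # r"
    using incr_bits_replicate[of i "S0 # r"] incr_bits_False unfolding l by (simp add: bit_sym_def)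
  also have "\<dots> = (replicate i S0 @ drop i l)[i := S1]"
    using assms(2,4) unfolding r_def by (simp add: list_update_append Cons_nth_drop_Suc[symmetric])
  finally show ?thesis .
qed

lemma length_bin_mono: "a \<le> b \<Longrightarrow> length (bin a) \<le> length (bin b)"
  using floor_log_mono by (simp add: length_bin mono_def)

lemma read_in_append: "i < length y \<Longrightarrow> read_in (pre @ y @ z) (length pre + 1 + i) = Some (y ! i)"
  by (simp add: read_in_def nth_append)

lemma enc_nae_append[simp]: "enc_nae (a @ b) = enc_nae a @ enc_nae b"
  by (simp add: enc_nae_def)

lemma enc_lit_hd: "enc_lit l \<noteq> [] \<and> enc_lit l ! 0 \<noteq> SEndClause"
proof -
  have "bin (snd l) ! 0 \<in> {S0, S1}" using set_bin[of "snd l"] bin_not_Nil[of "snd l"] nth_mem by blast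
  then show ?thesis by (auto simp: enc_lit_def nth_append)
qed

lemma last_enc_lit: "last (enc_lit l) = SEndLit"
  by (simp add: enc_lit_def)

definition nlits :: "cnf \<Rightarrow> nat" where "nlits F = sum_list (map length F)"

lemma nlits_le_length_enc: "nlits F \<le> length (enc_cnf F)"
proof (induction F)
  case Nil then show ?case by (simp add: nlits_def enc_cnf_def)
next
  case (Cons C F)
  have "length C \<le> length (concat (map enc_lit C))"
  proof (induction C)
    case Nil then show ?case by simp
  next
    case (Cons l C)
    have "enc_lit l \<noteq> []" using enc_lit_hd by blast
    then have "0 < length (enc_lit l)" by simp
    moreover have "length (concat (map enc_lit (l # C))) = length (enc_lit l) + length (concat (map enc_lit C))" by simp
    moreover have "length (l # C) = Suc (length C)" by simp
    ultimately show ?case using Cons by linarith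
  qed
  then show ?case using Cons by (simp add: nlits_def enc_cnf_def)
qed

section \<open>The transducer\<close>

text \<open>\<open>Emit tr nx ci q sb\<close> prints \<open>amplify k\<close> of the triple described by \<open>tr\<close>, currently at
  position \<open>q\<close> of clause \<open>ci\<close> and stage \<open>sb\<close> of that variable name, and then continues in
  phase \<open>nx\<close>.\<close>

datatype phase = Init | ClBegin | LitS bool | LitV bool bool | T2 bool bool | T3 | Skip | IncA | IncB
  | LitNext | AfterCl | Halt
datatype subphase = SBit nat | SKind nat | SPay bool | SRewI | SRewC | SSep | SCl
datatype mstate = Phase phase | Emit "vdesc \<times> vdesc \<times> vdesc" phase nat nat subphase

instance vdesc :: countable by countable_datatype
instance phase :: countable by countable_datatype
instance subphase :: countable by countable_datatype
instance mstate :: countable by countable_datatype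

definition is_digit :: "sym option \<Rightarrow> bool" where "is_digit r = (r = Some S0 \<or> r = Some S1)"

fun vdesc_kind :: "vdesc \<Rightarrow> nat" where
  "vdesc_kind DZ = 0" | "vdesc_kind DP = 1" | "vdesc_kind DQ = 2" | "vdesc_kind (DD b) = 3" | "vdesc_kind (DE b) = 4"
fun vdesc_carry :: "vdesc \<Rightarrow> bool" where
  "vdesc_carry (DD b) = b" | "vdesc_carry (DE b) = b" | "vdesc_carry _ = True"
fun vdesc_from_input :: "vdesc \<Rightarrow> bool" where
  "vdesc_from_input DP = True" | "vdesc_from_input DQ = True" | "vdesc_from_input _ = False"

type_synonym action = "mstate \<times> dir \<times> nat \<times> dir \<times> sym option"

text \<open>Names are printed least significant bit first: the copy index, three kind bits, and the
  payload, which is \<open>x + 1\<close> (incremented while it is copied from the input), the counter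
  \<open>c\<close> plus the carry of the descriptor, or \<open>1\<close> for $z$.\<close>

definition delta_emit :: "nat \<Rightarrow> vdesc \<times> vdesc \<times> vdesc \<Rightarrow> phase \<Rightarrow> nat \<Rightarrow> nat \<Rightarrow> subphase \<Rightarrow> sym option \<Rightarrow> nat \<Rightarrow> action" where
  "delta_emit k tr nx ci q sb r w = (let d = triple_nth tr (q div (k+1)); j = copy_choices k ! ci ! q in case sb of
     SBit b \<Rightarrow> (Emit tr nx ci q (if Suc b < ncopies k then SBit (Suc b) else SKind 0), N, w, N, Some (bit_sym (odd (j div 2^b))))
   | SKind b \<Rightarrow> (Emit tr nx ci q (if Suc b < 3 then SKind (Suc b) else SPay (vdesc_carry d)), N, w, N,
                 Some (bit_sym (odd (vdesc_kind d div 2^b))))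
   | SPay c \<Rightarrow> (if vdesc_from_input d then
                  (if is_digit r then (Emit tr nx ci q (SPay (c \<and> r = Some S1)), R, w, N, Some (bit_sym ((r = Some S1) \<noteq> c)))
                   else (Emit tr nx ci q SRewI, L, w, N, if c then Some S1 else None))
                else if d = DZ then (Emit tr nx ci q SSep, N, w, N, Some S1)
                else (if w \<noteq> 0 then (Emit tr nx ci q (SPay (c \<and> (w = 2 \<or> w = 4))), N, w, R, Some (bit_sym ((w = 2 \<or> w = 4) \<noteq> c)))
                      else (Emit tr nx ci q SRewC, N, w, L, if c then Some S1 else None)))
   | SRewI \<Rightarrow> (if is_digit r then (Emit tr nx ci q SRewI, L, w, N, None) else (Emit tr nx ci q SSep, R, w, N, None))
   | SRewC \<Rightarrow> (if w = 3 \<or> w = 4 then (Emit tr nx ci q SSep, N, w, N, None) else (Emit tr nx ci q SRewC, N, w, L, None))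
   | SSep \<Rightarrow> (if Suc q < width k then Emit tr nx ci (Suc q) (SBit 0) else Emit tr nx ci q SCl, N, w, N, Some SEndLit)
   | SCl \<Rightarrow> (if Suc ci < length (copy_choices k) then Emit tr nx (Suc ci) 0 (SBit 0) else Phase nx, N, w, N, Some SEndClause))"

fun delta_state :: "nat \<Rightarrow> mstate \<Rightarrow> sym option \<Rightarrow> nat \<Rightarrow> action" where
  "delta_state k (Phase Init) r w = (Phase ClBegin, R, 4, N, None)"
| "delta_state k (Phase ClBegin) r w = (if r = None then (Phase Halt, N, w, N, None)
     else if r = Some SEndClause then (Emit (DZ,DZ,DZ) AfterCl 0 0 (SBit 0), N, w, N, None)
     else (Phase (LitS True), N, w, N, None))"
| "delta_state k (Phase (LitS f)) r w = (if r = Some SNeg then (Phase (LitV f False), R, w, N, None)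
     else (Phase (LitV f True), N, w, N, None))"
| "delta_state k (Phase (LitV f pol)) r w = (Emit (DP,DQ,DQ) (T2 f pol) 0 0 (SBit 0), N, w, N, None)"
| "delta_state k (Phase (T2 f pol)) r w = (Emit (mid_triple f pol) T3 0 0 (SBit 0), N, w, N, None)"
| "delta_state k (Phase T3) r w = (Emit (DD True, DE True, DE True) Skip 0 0 (SBit 0), N, w, N, None)"
| "delta_state k (Phase Skip) r w = (if is_digit r then (Phase Skip, R, w, N, None) else (Phase IncA, R, w, N, None))"
| "delta_state k (Phase IncA) r w = (if w = 2 then (Phase IncA, N, 1, R, None) else if w = 4 then (Phase IncA, N, 3, R, None)
     else if w = 3 then (Phase LitNext, N, 4, N, None) else (Phase IncB, N, 2, L, None))"
| "delta_state k (Phase IncB) r w = (if w = 3 \<or> w = 4 then (Phase LitNext, N, w, N, None) else (Phase IncB, N, w, L, None))"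
| "delta_state k (Phase LitNext) r w = (if r = Some SEndClause then (Emit (DD False, DZ, DZ) AfterCl 0 0 (SBit 0), N, w, N, None)
     else (Phase (LitS False), N, w, N, None))"
| "delta_state k (Phase AfterCl) r w = (Phase ClBegin, R, w, N, None)"
| "delta_state k (Phase Halt) r w = (Phase Halt, N, w, N, None)"
| "delta_state k (Emit tr nx ci q sb) r w = delta_emit k tr nx ci q sb r w"

fun subphase_ok :: "nat \<Rightarrow> subphase \<Rightarrow> bool" where
  "subphase_ok k (SBit b) = (b < ncopies k)" | "subphase_ok k (SKind b) = (b < 3)" | "subphase_ok k _ = True"

fun valid_state :: "nat \<Rightarrow> mstate \<Rightarrow> bool" where
  "valid_state k (Phase p) = True"
| "valid_state k (Emit tr nx ci q sb) = (ci < length (copy_choices k) \<and> q < width k \<and> subphase_ok k sb)"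

lemma copy_sets_nonempty: "copy_sets k \<noteq> []"
proof -
  have "sorted_wrt (<) [0..<k+1]" by (rule sorted_wrt_upt)
  then have "[0..<k+1] \<in> set (copy_sets k)" by (auto simp: copy_sets_iff ncopies_def simp del: upt_Suc)
  then show ?thesis by auto
qed

lemma copy_choices_nonempty: "0 < length (copy_choices k)"
  using copy_sets_nonempty by (cases "copy_sets k") (auto simp: copy_choices_def)

lemma copy_choices_not_Nil[simp]: "copy_choices k \<noteq> []"
  using copy_choices_nonempty[of k] by auto

lemma width_pos[simp]: "0 < width k" by (simp add: width_def)
lemma ncopies_pos[simp]: "0 < ncopies k" by (simp add: ncopies_def)

lemma valid_state_start[simp]: "valid_state k (Emit tr nx 0 0 (SBit 0))"
  using copy_choices_nonempty by simp

lemma valid_state_closed: "valid_state k st \<Longrightarrow> valid_state k (fst (delta_state k st r w))"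
  by (cases "(k, st, r, w)" rule: delta_state.cases) (auto simp: delta_emit_def Let_def split: subphase.splits)

lemma write_closed: "w < 5 \<Longrightarrow> fst (snd (snd (delta_state k st r w))) < 5"
  by (cases "(k, st, r, w)" rule: delta_state.cases) (auto simp: delta_emit_def Let_def split: subphase.splits)

lemma vdesc_UNIV: "(UNIV::vdesc set) = {DZ,DP,DQ,DD True,DD False,DE True,DE False}"
  apply (rule set_eqI) subgoal for x by (cases x) auto done

lemma phase_UNIV: "(UNIV::phase set) = {Init, ClBegin, LitS True, LitS False, LitV True True, LitV True False,
   LitV False True, LitV False False, T2 True True, T2 True False, T2 False True, T2 False False,
   T3, Skip, IncA, IncB, LitNext, AfterCl, Halt}"
  apply (rule set_eqI) subgoal for x by (cases x) auto done

lemma finite_vdesc: "finite (UNIV::vdesc set)" by (simp add: vdesc_UNIV)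
lemma finite_phase: "finite (UNIV::phase set)" by (simp add: phase_UNIV)

lemma finite_subphase: "finite {sb. subphase_ok k sb}"
proof -
  have "{sb. subphase_ok k sb} \<subseteq> SBit ` {..<ncopies k} \<union> SKind ` {..<3} \<union> {SPay True, SPay False, SRewI, SRewC, SSep, SCl}"
  proof
    fix sb assume "sb \<in> {sb. subphase_ok k sb}" then show "sb \<in> SBit ` {..<ncopies k} \<union> SKind `
        {..<3} \<union> {SPay True, SPay False, SRewI, SRewC, SSep, SCl}"
      by (cases sb) auto
  qed
  then show ?thesis by (rule finite_subset) auto
qed

lemma finite_valid_state: "finite {st. valid_state k st}"
proof -
  let ?S = "(UNIV::(vdesc \<times> vdesc \<times> vdesc) set) \<times> (UNIV::phase set) \<times> {..<length (copy_choices k)} \<times> {..<width k} \<times> {sb. subphase_ok k sb}"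
  have fS: "finite ?S" using finite_vdesc finite_phase finite_subphase by (simp add: finite_prod)
  have "{st. valid_state k st} \<subseteq> range Phase \<union> (\<lambda>(tr,nx,ci,q,sb). Emit tr nx ci q sb) ` ?S"
  proof
    fix st assume "st \<in> {st. valid_state k st}"
    then show "st \<in> range Phase \<union> (\<lambda>(tr,nx,ci,q,sb). Emit tr nx ci q sb) ` ?S"
    proof (cases st)
      case (Emit tr nx ci q sb)
      then have "st = (\<lambda>(tr,nx,ci,q,sb). Emit tr nx ci q sb) (tr,nx,ci,q,sb)" by simp
      moreover have "(tr,nx,ci,q,sb) \<in> ?S" using Emit \<open>st \<in> {st. valid_state k st}\<close> by auto
      ultimately show ?thesis by blast
    qed auto
  qed
  moreover have "finite (range Phase)" using finite_phase by simp
  ultimately show ?thesis using fS by (meson finite_UnI finite_imageI finite_subset)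
qed

text \<open>States are numbered by \<open>to_nat\<close>. The valid states are finitely many and closed under
  transitions, so their largest number bounds the number of states.\<close>

definition nstates_bound :: "nat \<Rightarrow> nat" where "nstates_bound k = Suc (Max (to_nat ` {st. valid_state k st}))"

lemma to_nat_less_nstates_bound: "valid_state k st \<Longrightarrow> to_nat st < nstates_bound k"
proof -
  assume "valid_state k st"
  then have "to_nat st \<le> Max (to_nat ` {st. valid_state k st})"
    using finite_valid_state by (intro Max_ge) auto
  then show ?thesis by (simp add: nstates_bound_def)
qed

definition reduction_delta :: "nat \<Rightarrow> nat \<Rightarrow> sym option \<Rightarrow> nat \<Rightarrow> nat \<times> dir \<times> nat \<times> dir \<times> sym option" where
  "reduction_delta k q r w = (if q \<in> to_nat ` {st. valid_state k st} then
     (case delta_state k (from_nat q) r w of (st', di, w', dw, ou) \<Rightarrow> (to_nat st', di, w', dw, ou))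
     else (0, N, 0, N, None))"

definition reduction_machine :: "nat \<Rightarrow> ltm" where
  "reduction_machine k = LTM (nstates_bound k) 5 (to_nat (Phase Init)) (\<lambda>q. q = to_nat (Phase Halt)) (reduction_delta k)"

lemma wf_reduction_machine: "wf_ltm (reduction_machine k)"
  unfolding wf_ltm_def
proof (intro conjI allI impI)
  show "0 < nwork (reduction_machine k)" by (simp add: reduction_machine_def)
  show "start (reduction_machine k) < nstates (reduction_machine k)"
      using to_nat_less_nstates_bound[of k "Phase Init"] by (simp add: reduction_machine_def)
  fix q s w assume H: "q < nstates (reduction_machine k) \<and> w < nwork (reduction_machine k)"
  show "case delta (reduction_machine k) q s w of (q', _, w', _, _) \<Rightarrow> q' < nstates (reduction_machine k) \<and> w' < nwork (reduction_machine k)"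
  proof (cases "q \<in> to_nat ` {st. valid_state k st}")
    case True
    then obtain st where st: "q = to_nat st" "valid_state k st" by auto
    obtain st' di w' dw ou where D: "delta_state k st s w = (st',di,w',dw,ou)" by (cases "delta_state k st s w") auto
    have v: "valid_state k st'" using valid_state_closed[OF st(2), of s w] D by simp
    have w: "w' < 5" using write_closed[of w k st s] H D by (simp add: reduction_machine_def)
    show ?thesis using v w to_nat_less_nstates_bound[OF v] st D True
      by (simp add: reduction_machine_def reduction_delta_def)
  next
    case False
    then show ?thesis using to_nat_less_nstates_bound[of k "Phase Init"] by (simp add: reduction_machine_def reduction_delta_def)
  qed
qed

section \<open>Runs of the transducer\<close>

definition conf :: "mstate \<Rightarrow> nat \<Rightarrow> (nat \<Rightarrow> nat) \<Rightarrow> nat \<Rightarrow> sym list \<Rightarrow> config" where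
  "conf st ih wt wh out = (to_nat st, ih, wt, wh, out)"

definition out_sym :: "sym option \<Rightarrow> sym list" where
  "out_sym ou = (case ou of None \<Rightarrow> [] | Some s \<Rightarrow> [s])"

lemma step_conf:
  assumes "valid_state k st" "st \<noteq> Phase Halt" "delta_state k st (read_in x ih) (wt wh) = (st', di, w', dw, ou)"
  shows "step (reduction_machine k) x (conf st ih wt wh out) = conf st' (min (move di ih) (Suc
      (length x))) (wt(wh := w')) (move dw wh) (out @ out_sym ou)"
proof -
  have "to_nat st \<noteq> to_nat (Phase Halt)" using assms(2) by simp
  moreover have "to_nat st \<in> to_nat ` {st. valid_state k st}" using assms(1) by auto
  ultimately show ?thesis using assms(3)
    by (simp add: step_def conf_def reduction_machine_def reduction_delta_def out_sym_def)
qed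

abbreviation runs :: "nat \<Rightarrow> sym list \<Rightarrow> nat \<Rightarrow> config \<Rightarrow> config \<Rightarrow> bool" where
  "runs k \<equiv> reaches (reduction_machine k)"

lemma reaches_by_step:
  assumes "valid_state k st" "st \<noteq> Phase Halt" "wh < s" "delta_state k st (read_in x ih) (wt wh) = (st', di, w', dw, ou)"
    "runs k x s (conf st' (min (move di ih) (Suc (length x))) (wt(wh := w')) (move dw wh) (out @ out_sym ou)) c'"
  shows "runs k x s (conf st ih wt wh out) c'"
proof -
  have eq: "step (reduction_machine k) x (conf st ih wt wh out) = conf st' (min (move di ih) (Suc
      (length x))) (wt(wh := w')) (move dw wh) (out @ out_sym ou)"
    by (rule step_conf[of k st x ih wt wh st' di w' dw ou out, OF assms(1,2,4)])
  have w: "work_head (conf st ih wt wh out) < s" using assms(3) by (simp add: work_head_def conf_def)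
  have "runs k x s (step (reduction_machine k) x (conf st ih wt wh out)) c'" unfolding eq by (rule assms(5))
  then show ?thesis by (rule reaches_step[OF w])
qed

lemma reaches_conf_refl: "wh < s \<Longrightarrow> runs k x s (conf st ih wt wh out) (conf st ih wt wh out)"
  by (rule reaches_refl) (simp add: work_head_def conf_def)

lemma out_sym_simps[simp]: "out_sym None = []" "out_sym (Some s) = [s]"
  by (simp_all add: out_sym_def)

lemma tr_bit:
  assumes "ci < length (copy_choices k)" "q < width k" "b < ncopies k" "wh < s" "ih \<le> Suc (length x)"
    "runs k x s (conf (Emit tr nx ci q (if Suc b < ncopies k then SBit (Suc b) else SKind 0)) ih wt wh
       (out @ [bit_sym (odd ((copy_choices k ! ci ! q) div 2^b))])) c'"
  shows "runs k x s (conf (Emit tr nx ci q (SBit b)) ih wt wh out) c'"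
  apply (rule reaches_by_step[where st'="Emit tr nx ci q (if Suc b < ncopies k then SBit (Suc b) else SKind 0)" and di=N
     and w'="wt wh" and dw=N and ou="Some (bit_sym (odd ((copy_choices k ! ci ! q) div 2^b)))"])
  using assms by (simp_all add: delta_emit_def Let_def min_absorb1)

lemma tr_kind:
  assumes "ci < length (copy_choices k)" "q < width k" "b < 3" "wh < s" "ih \<le> Suc (length x)"
    "runs k x s (conf (Emit tr nx ci q (if Suc b < 3 then SKind (Suc b) else SPay (vdesc_carry (triple_nth tr (q div (k+1)))))) ih wt wh
       (out @ [bit_sym (odd (vdesc_kind (triple_nth tr (q div (k+1))) div 2^b))])) c'"
  shows "runs k x s (conf (Emit tr nx ci q (SKind b)) ih wt wh out) c'"
  apply (rule reaches_by_step[where st'="Emit tr nx ci q (if Suc b < 3 then SKind (Suc b)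
      else SPay (vdesc_carry (triple_nth tr (q div (k+1)))))" and di=N
     and w'="wt wh" and dw=N and ou="Some (bit_sym (odd (vdesc_kind (triple_nth tr (q div (k+1))) div 2^b)))"])
  using assms by (simp_all add: delta_emit_def Let_def min_absorb1)

lemma tr_payz:
  assumes "ci < length (copy_choices k)" "q < width k" "wh < s" "ih \<le> Suc (length x)" "triple_nth tr (q div (k+1)) = DZ"
    "runs k x s (conf (Emit tr nx ci q SSep) ih wt wh (out @ [S1])) c'"
  shows "runs k x s (conf (Emit tr nx ci q (SPay c)) ih wt wh out) c'"
  apply (rule reaches_by_step[where st'="Emit tr nx ci q SSep" and di=N and w'="wt wh" and dw=N and ou="Some S1"])
  using assms by (simp_all add: delta_emit_def Let_def min_absorb1)

lemma tr_payin_dig: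
  assumes "ci < length (copy_choices k)" "q < width k" "wh < s" "ih \<le> length x" "vdesc_from_input (triple_nth tr (q div (k+1)))"
    "read_in x ih = Some dg" "dg = S0 \<or> dg = S1"
    "runs k x s (conf (Emit tr nx ci q (SPay (c \<and> dg = S1))) (Suc ih) wt wh (out @ [bit_sym ((dg = S1) \<noteq> c)])) c'"
  shows "runs k x s (conf (Emit tr nx ci q (SPay c)) ih wt wh out) c'"
  apply (rule reaches_by_step[where st'="Emit tr nx ci q (SPay (c \<and> dg = S1))" and di=R and w'="wt wh" and dw=N
     and ou="Some (bit_sym ((dg = S1) \<noteq> c))"])
  using assms by (auto simp: delta_emit_def Let_def is_digit_def)

lemma tr_payin_end:
  assumes "ci < length (copy_choices k)" "q < width k" "wh < s" "ih \<le> Suc (length x)" "vdesc_from_input (triple_nth tr (q div (k+1)))"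
    "\<not> is_digit (read_in x ih)"
    "runs k x s (conf (Emit tr nx ci q SRewI) (ih - 1) wt wh (out @ (if c then [S1] else []))) c'"
  shows "runs k x s (conf (Emit tr nx ci q (SPay c)) ih wt wh out) c'"
  apply (rule reaches_by_step[where st'="Emit tr nx ci q SRewI" and di=L and w'="wt wh" and dw=N
     and ou="if c then Some S1 else None"])
  using assms by (auto simp: delta_emit_def Let_def)

lemma tr_payc_nz:
  assumes "ci < length (copy_choices k)" "q < width k" "wh < s" "ih \<le> Suc (length x)" "\<not> vdesc_from_input (triple_nth tr (q div (k+1)))"
    "triple_nth tr (q div (k+1)) \<noteq> DZ" "wt wh \<noteq> 0"
    "runs k x s (conf (Emit tr nx ci q (SPay (c \<and> (wt wh = 2 \<or> wt wh = 4)))) ih wt (Suc wh)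
       (out @ [bit_sym ((wt wh = 2 \<or> wt wh = 4) \<noteq> c)])) c'"
  shows "runs k x s (conf (Emit tr nx ci q (SPay c)) ih wt wh out) c'"
  apply (rule reaches_by_step[where st'="Emit tr nx ci q (SPay (c \<and> (wt wh = 2 \<or> wt wh = 4)))" and di=N and w'="wt wh" and dw=R
     and ou="Some (bit_sym ((wt wh = 2 \<or> wt wh = 4) \<noteq> c))"])
  using assms by (simp_all add: delta_emit_def Let_def min_absorb1)

lemma tr_payc_z:
  assumes "ci < length (copy_choices k)" "q < width k" "wh < s" "ih \<le> Suc (length x)" "\<not> vdesc_from_input (triple_nth tr (q div (k+1)))"
    "triple_nth tr (q div (k+1)) \<noteq> DZ" "wt wh = 0"
    "runs k x s (conf (Emit tr nx ci q SRewC) ih wt (wh - 1) (out @ (if c then [S1] else []))) c'"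
  shows "runs k x s (conf (Emit tr nx ci q (SPay c)) ih wt wh out) c'"
  apply (rule reaches_by_step[where st'="Emit tr nx ci q SRewC" and di=N and w'="wt wh" and dw=L
     and ou="if c then Some S1 else None"])
  using assms by (auto simp: delta_emit_def Let_def min_absorb1 fun_upd_idem)

lemma tr_rewi_dig:
  assumes "ci < length (copy_choices k)" "q < width k" "wh < s" "ih \<le> Suc (length x)" "is_digit (read_in x ih)"
    "runs k x s (conf (Emit tr nx ci q SRewI) (ih - 1) wt wh out) c'"
  shows "runs k x s (conf (Emit tr nx ci q SRewI) ih wt wh out) c'"
  apply (rule reaches_by_step[where st'="Emit tr nx ci q SRewI" and di=L and w'="wt wh" and dw=N and ou=None])
  using assms by (auto simp: delta_emit_def Let_def)

lemma tr_rewi_end: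
  assumes "ci < length (copy_choices k)" "q < width k" "wh < s" "ih \<le> length x" "\<not> is_digit (read_in x ih)"
    "runs k x s (conf (Emit tr nx ci q SSep) (Suc ih) wt wh out) c'"
  shows "runs k x s (conf (Emit tr nx ci q SRewI) ih wt wh out) c'"
  apply (rule reaches_by_step[where st'="Emit tr nx ci q SSep" and di=R and w'="wt wh" and dw=N and ou=None])
  using assms by (auto simp: delta_emit_def Let_def)

lemma tr_rewc_0:
  assumes "ci < length (copy_choices k)" "q < width k" "wh < s" "ih \<le> Suc (length x)" "wt wh = 3 \<or> wt wh = 4"
    "runs k x s (conf (Emit tr nx ci q SSep) ih wt wh out) c'"
  shows "runs k x s (conf (Emit tr nx ci q SRewC) ih wt wh out) c'"
  apply (rule reaches_by_step[where st'="Emit tr nx ci q SSep" and di=N and w'="wt wh" and dw=N and ou=None])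
  using assms by (auto simp: delta_emit_def Let_def min_absorb1)

lemma tr_rewc:
  assumes "ci < length (copy_choices k)" "q < width k" "wh < s" "ih \<le> Suc (length x)" "wt wh \<noteq> 3" "wt wh \<noteq> 4"
    "runs k x s (conf (Emit tr nx ci q SRewC) ih wt (wh - 1) out) c'"
  shows "runs k x s (conf (Emit tr nx ci q SRewC) ih wt wh out) c'"
  apply (rule reaches_by_step[where st'="Emit tr nx ci q SRewC" and di=N and w'="wt wh" and dw=L and ou=None])
  using assms by (auto simp: delta_emit_def Let_def min_absorb1)

lemma tr_sep:
  assumes "ci < length (copy_choices k)" "q < width k" "wh < s" "ih \<le> Suc (length x)"
    "runs k x s (conf (if Suc q < width k then Emit tr nx ci (Suc q) (SBit 0) else Emit tr nx ci q SCl) ih wt wh (out @ [SEndLit])) c'"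
  shows "runs k x s (conf (Emit tr nx ci q SSep) ih wt wh out) c'"
  apply (rule reaches_by_step[where st'="if Suc q < width k then Emit tr nx ci (Suc q) (SBit 0) else Emit tr nx ci q SCl" and di=N
     and w'="wt wh" and dw=N and ou="Some SEndLit"])
  using assms by (simp_all add: delta_emit_def Let_def min_absorb1)

lemma tr_cl:
  assumes "ci < length (copy_choices k)" "q < width k" "wh < s" "ih \<le> Suc (length x)"
    "runs k x s (conf (if Suc ci < length (copy_choices k) then Emit tr nx (Suc ci) 0 (SBit 0)
        else Phase nx) ih wt wh (out @ [SEndClause])) c'"
  shows "runs k x s (conf (Emit tr nx ci q SCl) ih wt wh out) c'"
  apply (rule reaches_by_step[where st'="if Suc ci < length (copy_choices k) then Emit tr nx (Suc ci) 0 (SBit 0) else Phase nx" and di=N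
     and w'="wt wh" and dw=N and ou="Some SEndClause"])
  using assms by (simp_all add: delta_emit_def Let_def min_absorb1)

lemma tr_init:
  assumes "wh < s" "ih \<le> length x"
    "runs k x s (conf (Phase ClBegin) (Suc ih) (wt(wh := 4)) wh out) c'"
  shows "runs k x s (conf (Phase Init) ih wt wh out) c'"
  apply (rule reaches_by_step[where st'="Phase ClBegin" and di=R and w'=4 and dw=N and ou=None])
  using assms by auto

lemma tr_clb_none:
  assumes "wh < s" "ih \<le> Suc (length x)" "read_in x ih = None"
    "runs k x s (conf (Phase Halt) ih wt wh out) c'"
  shows "runs k x s (conf (Phase ClBegin) ih wt wh out) c'"
  apply (rule reaches_by_step[where st'="Phase Halt" and di=N and w'="wt wh" and dw=N and ou=None])
  using assms by (auto simp: min_absorb1)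

lemma tr_clb_end:
  assumes "wh < s" "ih \<le> Suc (length x)" "read_in x ih = Some SEndClause"
    "runs k x s (conf (Emit (DZ,DZ,DZ) AfterCl 0 0 (SBit 0)) ih wt wh out) c'"
  shows "runs k x s (conf (Phase ClBegin) ih wt wh out) c'"
  apply (rule reaches_by_step[where st'="Emit (DZ,DZ,DZ) AfterCl 0 0 (SBit 0)" and di=N and w'="wt wh" and dw=N and ou=None])
  using assms by (auto simp: min_absorb1)

lemma tr_clb_lit:
  assumes "wh < s" "ih \<le> Suc (length x)" "read_in x ih = Some sy" "sy \<noteq> SEndClause"
    "runs k x s (conf (Phase (LitS True)) ih wt wh out) c'"
  shows "runs k x s (conf (Phase ClBegin) ih wt wh out) c'"
  apply (rule reaches_by_step[where st'="Phase (LitS True)" and di=N and w'="wt wh" and dw=N and ou=None])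
  using assms by (auto simp: min_absorb1)

lemma tr_lits_neg:
  assumes "wh < s" "ih \<le> length x" "read_in x ih = Some SNeg"
    "runs k x s (conf (Phase (LitV f False)) (Suc ih) wt wh out) c'"
  shows "runs k x s (conf (Phase (LitS f)) ih wt wh out) c'"
  apply (rule reaches_by_step[where st'="Phase (LitV f False)" and di=R and w'="wt wh" and dw=N and ou=None])
  using assms by auto

lemma tr_lits_pos:
  assumes "wh < s" "ih \<le> Suc (length x)" "read_in x ih \<noteq> Some SNeg"
    "runs k x s (conf (Phase (LitV f True)) ih wt wh out) c'"
  shows "runs k x s (conf (Phase (LitS f)) ih wt wh out) c'"
  apply (rule reaches_by_step[where st'="Phase (LitV f True)" and di=N and w'="wt wh" and dw=N and ou=None])
  using assms by (auto simp: min_absorb1)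

lemma tr_litv:
  assumes "wh < s" "ih \<le> Suc (length x)"
    "runs k x s (conf (Emit (DP,DQ,DQ) (T2 f pol) 0 0 (SBit 0)) ih wt wh out) c'"
  shows "runs k x s (conf (Phase (LitV f pol)) ih wt wh out) c'"
  apply (rule reaches_by_step[where st'="Emit (DP,DQ,DQ) (T2 f pol) 0 0 (SBit 0)" and di=N and w'="wt wh" and dw=N and ou=None])
  using assms by (auto simp: min_absorb1)

lemma tr_t2:
  assumes "wh < s" "ih \<le> Suc (length x)"
    "runs k x s (conf (Emit (mid_triple f pol) T3 0 0 (SBit 0)) ih wt wh out) c'"
  shows "runs k x s (conf (Phase (T2 f pol)) ih wt wh out) c'"
  apply (rule reaches_by_step[where st'="Emit (mid_triple f pol) T3 0 0 (SBit 0)" and di=N and w'="wt wh" and dw=N and ou=None])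
  using assms by (auto simp: min_absorb1)

lemma tr_t3:
  assumes "wh < s" "ih \<le> Suc (length x)"
    "runs k x s (conf (Emit (DD True, DE True, DE True) Skip 0 0 (SBit 0)) ih wt wh out) c'"
  shows "runs k x s (conf (Phase T3) ih wt wh out) c'"
  apply (rule reaches_by_step[where st'="Emit (DD True, DE True, DE True) Skip 0 0 (SBit 0)" and di=N and w'="wt wh" and dw=N and ou=None])
  using assms by (auto simp: min_absorb1)

lemma tr_skip_dig:
  assumes "wh < s" "ih \<le> length x" "is_digit (read_in x ih)"
    "runs k x s (conf (Phase Skip) (Suc ih) wt wh out) c'"
  shows "runs k x s (conf (Phase Skip) ih wt wh out) c'"
  apply (rule reaches_by_step[where st'="Phase Skip" and di=R and w'="wt wh" and dw=N and ou=None])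
  using assms by auto

lemma tr_skip_end:
  assumes "wh < s" "ih \<le> length x" "\<not> is_digit (read_in x ih)"
    "runs k x s (conf (Phase IncA) (Suc ih) wt wh out) c'"
  shows "runs k x s (conf (Phase Skip) ih wt wh out) c'"
  apply (rule reaches_by_step[where st'="Phase IncA" and di=R and w'="wt wh" and dw=N and ou=None])
  using assms by auto

lemma tr_inca_2:
  assumes "wh < s" "ih \<le> Suc (length x)" "wt wh = 2"
    "runs k x s (conf (Phase IncA) ih (wt(wh := 1)) (Suc wh) out) c'"
  shows "runs k x s (conf (Phase IncA) ih wt wh out) c'"
  apply (rule reaches_by_step[where st'="Phase IncA" and di=N and w'=1 and dw=R and ou=None])
  using assms by (auto simp: min_absorb1)

lemma tr_inca_4:
  assumes "wh < s" "ih \<le> Suc (length x)" "wt wh = 4"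
    "runs k x s (conf (Phase IncA) ih (wt(wh := 3)) (Suc wh) out) c'"
  shows "runs k x s (conf (Phase IncA) ih wt wh out) c'"
  apply (rule reaches_by_step[where st'="Phase IncA" and di=N and w'=3 and dw=R and ou=None])
  using assms by (auto simp: min_absorb1)

lemma tr_inca_3:
  assumes "wh < s" "ih \<le> Suc (length x)" "wt wh = 3"
    "runs k x s (conf (Phase LitNext) ih (wt(wh := 4)) wh out) c'"
  shows "runs k x s (conf (Phase IncA) ih wt wh out) c'"
  apply (rule reaches_by_step[where st'="Phase LitNext" and di=N and w'=4 and dw=N and ou=None])
  using assms by (auto simp: min_absorb1)

lemma tr_inca_e:
  assumes "wh < s" "ih \<le> Suc (length x)" "wt wh \<noteq> 2" "wt wh \<noteq> 3" "wt wh \<noteq> 4"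
    "runs k x s (conf (Phase IncB) ih (wt(wh := 2)) (wh - 1) out) c'"
  shows "runs k x s (conf (Phase IncA) ih wt wh out) c'"
  apply (rule reaches_by_step[where st'="Phase IncB" and di=N and w'=2 and dw=L and ou=None])
  using assms by (auto simp: min_absorb1)

lemma tr_incb_0:
  assumes "wh < s" "ih \<le> Suc (length x)" "wt wh = 3 \<or> wt wh = 4"
    "runs k x s (conf (Phase LitNext) ih wt wh out) c'"
  shows "runs k x s (conf (Phase IncB) ih wt wh out) c'"
  apply (rule reaches_by_step[where st'="Phase LitNext" and di=N and w'="wt wh" and dw=N and ou=None])
  using assms by (auto simp: min_absorb1)

lemma tr_incb:
  assumes "wh < s" "ih \<le> Suc (length x)" "wt wh \<noteq> 3" "wt wh \<noteq> 4"
    "runs k x s (conf (Phase IncB) ih wt (wh - 1) out) c'"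
  shows "runs k x s (conf (Phase IncB) ih wt wh out) c'"
  apply (rule reaches_by_step[where st'="Phase IncB" and di=N and w'="wt wh" and dw=L and ou=None])
  using assms by (auto simp: min_absorb1)

lemma tr_ln_end:
  assumes "wh < s" "ih \<le> Suc (length x)" "read_in x ih = Some SEndClause"
    "runs k x s (conf (Emit (DD False, DZ, DZ) AfterCl 0 0 (SBit 0)) ih wt wh out) c'"
  shows "runs k x s (conf (Phase LitNext) ih wt wh out) c'"
  apply (rule reaches_by_step[where st'="Emit (DD False, DZ, DZ) AfterCl 0 0 (SBit 0)" and di=N and w'="wt wh" and dw=N and ou=None])
  using assms by (auto simp: min_absorb1)

lemma tr_ln_lit:
  assumes "wh < s" "ih \<le> Suc (length x)" "read_in x ih \<noteq> Some SEndClause"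
    "runs k x s (conf (Phase (LitS False)) ih wt wh out) c'"
  shows "runs k x s (conf (Phase LitNext) ih wt wh out) c'"
  apply (rule reaches_by_step[where st'="Phase (LitS False)" and di=N and w'="wt wh" and dw=N and ou=None])
  using assms by (auto simp: min_absorb1)

lemma tr_after:
  assumes "wh < s" "ih \<le> length x"
    "runs k x s (conf (Phase ClBegin) (Suc ih) wt wh out) c'"
  shows "runs k x s (conf (Phase AfterCl) ih wt wh out) c'"
  apply (rule reaches_by_step[where st'="Phase ClBegin" and di=R and w'="wt wh" and dw=N and ou=None])
  using assms by auto

definition payload_bits :: "nat \<Rightarrow> nat \<Rightarrow> vdesc \<Rightarrow> sym list" where
  "payload_bits v c d = (case d of DZ \<Rightarrow> [S1] | DP \<Rightarrow> incr_bits True (bin v) | DQ \<Rightarrow> incr_bits True (bin v)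
     | DD b \<Rightarrow> incr_bits b (bin c) | DE b \<Rightarrow> incr_bits b (bin c))"

lemma bin_copy_var:
  assumes "j < ncopies k" "0 < c"
  shows "bin (copy_var k j (vdesc_code v c d)) = low_bits (ncopies k) j @ low_bits 3 (vdesc_kind d) @ payload_bits v c d"
proof -
  have j: "j < 2 ^ ncopies k" using assms(1) ncopies_less_pow by blast
  have pay: "vdesc_code v c d = vdesc_kind d + 2^3 * (case d of DZ \<Rightarrow> 1 | DP \<Rightarrow> v+1 | DQ \<Rightarrow> v+1 | DD b \<Rightarrow> c + (if b then 1 else 0)
      | DE b \<Rightarrow> c + (if b then 1 else 0))"
    by (cases d) (simp_all add: var_code_def)
  have pp: "0 < (case d of DZ \<Rightarrow> 1 | DP \<Rightarrow> v+1 | DQ \<Rightarrow> v+1 | DD b \<Rightarrow> c + (if b then 1 else 0)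
      | DE b \<Rightarrow> c + (if b then 1 else 0))" using assms(2) by (cases d) auto
  have kd: "vdesc_kind d < 2^3" by (cases d) auto
  have ps: "bin (case d of DZ \<Rightarrow> 1 | DP \<Rightarrow> v+1 | DQ \<Rightarrow> v+1 | DD b \<Rightarrow> c + (if b then 1 else 0)
      | DE b \<Rightarrow> c + (if b then 1 else 0)) = payload_bits v c d"
  proof (cases d)
    case DZ then show ?thesis by (simp add: payload_bits_def bin_less_2)
  next
    case DP then show ?thesis by (simp add: payload_bits_def incr_bits_bin)
  next
    case DQ then show ?thesis by (simp add: payload_bits_def incr_bits_bin)
  next
    case (DD b) then show ?thesis by (cases b) (simp_all add: payload_bits_def incr_bits_bin incr_bits_False[OF set_bin])
  next
    case (DE b) then show ?thesis by (cases b) (simp_all add: payload_bits_def incr_bits_bin incr_bits_False[OF set_bin])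
  qed
  have pos: "0 < vdesc_code v c d" using pay pp by simp
  have e1: "bin (j + 2 ^ ncopies k * vdesc_code v c d) = low_bits (ncopies k) j @ bin (vdesc_code v c d)" by (rule bin_add_pow[OF j pos])
  have e2: "bin (vdesc_code v c d) = low_bits 3 (vdesc_kind d) @ payload_bits v c d"
    unfolding pay bin_add_pow[OF kd pp] ps ..
  show ?thesis unfolding copy_var_def e1 e2 ..
qed

lemma copy_choices_nth:
  assumes "ci < length (copy_choices k)" "q < width k"
  shows "copy_choices k ! ci ! q < ncopies k" "length (copy_choices k ! ci) = width k"
proof -
  have "copy_choices k ! ci \<in> set (copy_choices k)" using assms(1) by simp
  then obtain X Y Z where XYZ: "X\<in>set (copy_sets k)" "Y\<in>set (copy_sets k)" "Z\<in>set (copy_sets k)" "copy_choices k ! ci = X @ Y @ Z"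
    unfolding copy_choices_iff by blast
  have sub: "set (X @ Y @ Z) \<subseteq> {..<ncopies k}" using XYZ(1-3) unfolding copy_sets_iff by auto
  have len: "length (X @ Y @ Z) = width k" using XYZ(1-3) unfolding copy_sets_iff width_def by simp
  show "length (copy_choices k ! ci) = width k" using len XYZ(4) by simp
  have "(X @ Y @ Z) ! q \<in> set (X @ Y @ Z)" using assms(2) len by (intro nth_mem) simp
  then show "copy_choices k ! ci ! q < ncopies k" using sub XYZ(4) by auto
qed

text \<open>The work tape holds the position counter least significant bit first: \<open>1, 2\<close> encode
  the bits \<open>0, 1\<close>, \<open>3, 4\<close> do the same in the first cell, which the head uses as a left end
  marker, and \<open>0\<close> is blank.\<close>

definition counter_tape :: "sym list \<Rightarrow> nat \<Rightarrow> nat" where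
  "counter_tape l i = (if i < length l then (if i = 0 then (if l!0 = S1 then 4 else 3) else (if l!i = S1 then 2 else 1)) else 0)"

definition var_field_at :: "sym list \<Rightarrow> nat \<Rightarrow> nat \<Rightarrow> bool" where
  "var_field_at x ih v \<longleftrightarrow> (\<exists>pre rest. x = pre @ bin v @ SEndLit # rest \<and> ih = length pre + 1 \<and> (pre = [] \<or> last pre \<notin> {S0, S1}))"

lemma emit_index_bits:
  assumes a: "ci < length (copy_choices k)" "q < width k" "wh < s" "ih \<le> Suc (length x)"
  shows "ncopies k - b = m \<Longrightarrow> b < ncopies k \<Longrightarrow> runs k x s (conf (Emit tr nx ci q (SBit b)) ih wt wh out)
     (conf (Emit tr nx ci q (SKind 0)) ih wt wh (out @ map (\<lambda>b. bit_sym (odd ((copy_choices k ! ci ! q) div 2^b))) [b..<ncopies k]))"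
proof (induction m arbitrary: b out)
  case 0 then show ?case by simp
next
  case (Suc m)
  have u: "[b..<ncopies k] = b # [Suc b..<ncopies k]" using Suc.prems by (simp add: upt_conv_Cons)
  show ?case
  proof (cases "Suc b < ncopies k")
    case True
    have "runs k x s (conf (Emit tr nx ci q (SBit (Suc b))) ih wt wh (out @ [bit_sym (odd ((copy_choices k ! ci ! q) div 2^b))]))
      (conf (Emit tr nx ci q (SKind 0)) ih wt wh ((out @ [bit_sym (odd ((copy_choices k ! ci ! q) div 2^b))]) @
          map (\<lambda>b. bit_sym (odd ((copy_choices k ! ci ! q) div 2^b))) [Suc b..<ncopies k]))"
      using Suc.IH[of "Suc b" "out @ [bit_sym (odd ((copy_choices k ! ci ! q) div 2^b))]"] Suc.prems True by simp
    then show ?thesis using True u by (intro tr_bit[OF a(1,2) Suc.prems(2) a(3,4)]) simp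
  next
    case False
    then have "[Suc b..<ncopies k] = []" by simp
    then show ?thesis using False u by (intro tr_bit[OF a(1,2) Suc.prems(2) a(3,4)]) (simp add: reaches_conf_refl a(3))
  qed
qed

lemma emit_kind_bits:
  assumes a: "ci < length (copy_choices k)" "q < width k" "wh < s" "ih \<le> Suc (length x)"
  shows "runs k x s (conf (Emit tr nx ci q (SKind 0)) ih wt wh out)
     (conf (Emit tr nx ci q (SPay (vdesc_carry (triple_nth tr (q div (k+1)))))) ih wt wh (out
         @ low_bits 3 (vdesc_kind (triple_nth tr (q div (k+1))))))"
proof -
  let ?kd = "vdesc_kind (triple_nth tr (q div (k+1)))"
  have n3: "low_bits 3 ?kd = [bit_sym (odd (?kd div 2^0)), bit_sym (odd (?kd div 2^1)), bit_sym (odd (?kd div 2^2))]"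
    by (simp add: low_bits_eq_map upt_rec)
  show ?thesis unfolding n3
    apply (rule tr_kind[OF a(1,2) _ a(3,4)], simp)
    apply (simp, rule tr_kind[OF a(1,2) _ a(3,4)], simp)
    apply (simp, rule tr_kind[OF a(1,2) _ a(3,4)], simp)
    apply (simp add: reaches_conf_refl a(3))
    done
qed

lemma emit_input_payload:
  assumes a: "ci < length (copy_choices k)" "q < width k" "wh < s" "x = pre @ ds @ SEndLit # rest" "set ds \<subseteq> {S0, S1}"
    "vdesc_from_input (triple_nth tr (q div (k+1)))"
  shows "length ds - i = m \<Longrightarrow> i \<le> length ds \<Longrightarrow>
    runs k x s (conf (Emit tr nx ci q (SPay c)) (length pre + 1 + i) wt wh out)
      (conf (Emit tr nx ci q SRewI) (length pre + length ds) wt wh (out @ incr_bits c (drop i ds)))"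
proof (induction m arbitrary: i c out)
  case 0
  then have i: "i = length ds" by simp
  have r: "read_in x (length pre + 1 + i) = Some SEndLit"
    using read_in_append[of 0 "[SEndLit]" "pre @ ds" rest] i a(4) by simp
  show ?case
    apply (rule tr_payin_end[OF a(1,2,3)])
    using a(4,6) r i by (auto simp: is_digit_def reaches_conf_refl a(3))
next
  case (Suc m)
  then have i: "i < length ds" by simp
  have r: "read_in x (length pre + 1 + i) = Some (ds ! i)"
    using read_in_append[of i ds pre "SEndLit # rest"] i a(4) by simp
  have dg: "ds ! i = S0 \<or> ds ! i = S1" using a(5) i nth_mem by blast
  have d: "drop i ds = ds ! i # drop (Suc i) ds" using i by (simp add: Cons_nth_drop_Suc)
  have IH: "runs k x s (conf (Emit tr nx ci q (SPay (c \<and> ds ! i = S1))) (length pre + 1 + Suc i) wt wh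
       (out @ [bit_sym ((ds ! i = S1) \<noteq> c)]))
     (conf (Emit tr nx ci q SRewI) (length pre + length ds) wt wh ((out @ [bit_sym ((ds ! i = S1) \<noteq> c)]) @
       incr_bits (c \<and> ds ! i = S1) (drop (Suc i) ds)))"
    using Suc.IH[of "Suc i" "c \<and> ds ! i = S1" "out @ [bit_sym ((ds ! i = S1) \<noteq> c)]"] Suc.prems by simp
  show ?case
    using IH d a(4) i by - (rule tr_payin_dig[OF a(1,2,3) _ a(6) r dg], simp_all)
qed

lemma rewind_input:
  assumes a: "ci < length (copy_choices k)" "q < width k" "wh < s" "x = pre @ ds @ SEndLit # rest" "set ds \<subseteq> {S0, S1}"
    "pre = [] \<or> last pre \<notin> {S0, S1}"
  shows "i \<le> length ds \<Longrightarrow> runs k x s (conf (Emit tr nx ci q SRewI) (length pre + i) wt wh out)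
      (conf (Emit tr nx ci q SSep) (length pre + 1) wt wh out)"
proof (induction i)
  case 0
  have r: "\<not> is_digit (read_in x (length pre))"
  proof (cases "pre = []")
    case True then show ?thesis by (simp add: read_in_def is_digit_def)
  next
    case False
    then have "0 < length pre" by simp
    then have "read_in x (length pre) = Some (last pre)" using a(4) False
      by (simp add: read_in_def nth_append last_conv_nth Suc_le_eq)
    then show ?thesis using a(6) False by (auto simp: is_digit_def)
  qed
  show ?case
    apply (rule tr_rewi_end[OF a(1,2,3)])
    using a(4) r by (auto simp: reaches_conf_refl a(3))
next
  case (Suc i)
  then have i: "i < length ds" by simp
  have r: "read_in x (length pre + 1 + i) = Some (ds ! i)"
    using read_in_append[of i ds pre "SEndLit # rest"] i a(4) by simp
  have dg: "ds ! i = S0 \<or> ds ! i = S1" using a(5) i nth_mem by blast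
  show ?case
    apply (rule tr_rewi_dig[OF a(1,2,3)])
    using a(4) i r dg Suc by (auto simp: is_digit_def)
qed

lemma counter_tape_nonzero: "i < length l \<Longrightarrow> counter_tape l i \<noteq> 0"
  by (simp add: counter_tape_def)
lemma counter_tape_bit: "i < length l \<Longrightarrow> (counter_tape l i = 2 \<or> counter_tape l i = 4) = (l ! i = S1)"
  by (simp add: counter_tape_def)
lemma counter_tape_end: "counter_tape l (length l) = 0"
  by (simp add: counter_tape_def)
lemma counter_tape_first: "l \<noteq> [] \<Longrightarrow> counter_tape l 0 = 3 \<or> counter_tape l 0 = 4"
  by (simp add: counter_tape_def)
lemma counter_tape_pos: "0 < i \<Longrightarrow> counter_tape l i \<noteq> 3 \<and> counter_tape l i \<noteq> 4"
  by (simp add: counter_tape_def)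

lemma emit_counter_payload:
  assumes a: "ci < length (copy_choices k)" "q < width k" "ih \<le> Suc (length x)" "\<not> vdesc_from_input (triple_nth tr (q div (k+1)))"
    "triple_nth tr (q div (k+1)) \<noteq> DZ" "l \<noteq> []" "length l < s"
  shows "length l - i = m \<Longrightarrow> i \<le> length l \<Longrightarrow>
    runs k x s (conf (Emit tr nx ci q (SPay c)) ih (counter_tape l) i out)
      (conf (Emit tr nx ci q SRewC) ih (counter_tape l) (length l - 1) (out @ incr_bits c (drop i l)))"
proof (induction m arbitrary: i c out)
  case 0
  then have i: "i = length l" by simp
  show ?case
    apply (rule tr_payc_z[OF a(1,2) _ a(3,4,5)])
    using i a(7) by (auto simp: counter_tape_end reaches_conf_refl)
next
  case (Suc m)
  then have i: "i < length l" by simp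
  have d: "drop i l = l ! i # drop (Suc i) l" using i by (simp add: Cons_nth_drop_Suc)
  have IH: "runs k x s (conf (Emit tr nx ci q (SPay (c \<and> l ! i = S1))) ih (counter_tape l) (Suc i)
       (out @ [bit_sym ((l ! i = S1) \<noteq> c)]))
     (conf (Emit tr nx ci q SRewC) ih (counter_tape l) (length l - 1) ((out @ [bit_sym ((l ! i = S1) \<noteq> c)]) @
       incr_bits (c \<and> l ! i = S1) (drop (Suc i) l)))"
    using Suc.IH[of "Suc i" "c \<and> l ! i = S1" "out @ [bit_sym ((l ! i = S1) \<noteq> c)]"] Suc.prems by simp
  show ?case
    using IH d counter_tape_bit[OF i] counter_tape_nonzero[OF i] i a(7)
    by - (rule tr_payc_nz[OF a(1,2) _ a(3,4,5)], simp_all)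
qed

lemma rewind_counter:
  assumes a: "ci < length (copy_choices k)" "q < width k" "ih \<le> Suc (length x)" "length l < s"
  shows "i < length l \<Longrightarrow> runs k x s (conf (Emit tr nx ci q SRewC) ih (counter_tape l) i out)
      (conf (Emit tr nx ci q SSep) ih (counter_tape l) 0 out)"
proof (induction i)
  case 0
  then have "l \<noteq> []" by auto
  then show ?case
    apply (intro tr_rewc_0[OF a(1,2) _ a(3)])
    using a(4) by (auto simp: counter_tape_first reaches_conf_refl)
next
  case (Suc i)
  show ?case
    apply (rule tr_rewc[OF a(1,2) _ a(3)])
    using Suc a(4) counter_tape_pos[of "Suc i" l] by auto
qed

lemma emit_payload:
  assumes a: "ci < length (copy_choices k)" "q < width k" "ih \<le> Suc (length x)" "0 < c" "length (bin c) < s"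
    "vdesc_from_input (triple_nth tr (q div (k+1))) \<Longrightarrow> var_field_at x ih v"
  defines "d \<equiv> triple_nth tr (q div (k+1))"
  shows "runs k x s (conf (Emit tr nx ci q (SPay (vdesc_carry d))) ih (counter_tape (bin c)) 0 out)
     (conf (Emit tr nx ci q SSep) ih (counter_tape (bin c)) 0 (out @ payload_bits v c d))"
proof -
  have s0: "0 < s" using a(5) by simp
  show ?thesis
  proof (cases "vdesc_from_input d")
    case True
    then have pd: "payload_bits v c d = incr_bits True (bin v)" "vdesc_carry d = True"
      by (cases d; simp add: payload_bits_def)+
    obtain pre rest where x: "x = pre @ bin v @ SEndLit # rest" and ih: "ih = length pre + 1"
       and nd: "pre = [] \<or> last pre \<notin> {S0, S1}"
      using a(6) True by (auto simp: var_field_at_def d_def)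
    have p1: "runs k x s (conf (Emit tr nx ci q (SPay True)) (length pre + 1 + 0) (counter_tape (bin c)) 0 out)
       (conf (Emit tr nx ci q SRewI) (length pre + length (bin v)) (counter_tape (bin c)) 0
          (out @ incr_bits True (drop 0 (bin v))))"
      using emit_input_payload[OF a(1,2) s0 x set_bin True[unfolded d_def], where i=0 and m="length (bin v)" and c=True
        and nx=nx and wt="counter_tape (bin c)" and out="out"] by simp
    have p2: "runs k x s (conf (Emit tr nx ci q SRewI) (length pre + length (bin v)) (counter_tape (bin c)) 0
          (out @ incr_bits True (drop 0 (bin v))))
       (conf (Emit tr nx ci q SSep) (length pre + 1) (counter_tape (bin c)) 0
          (out @ incr_bits True (drop 0 (bin v))))"
      using rewind_input[OF a(1,2) s0 x set_bin nd, of "length (bin v)"] by simp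
    show ?thesis using reaches_trans[OF p1 p2] pd ih by simp
  next
    case False
    show ?thesis
    proof (cases "d = DZ")
      case True
      then show ?thesis
        by (intro tr_payz[OF a(1,2) s0 a(3)]) (simp_all add: d_def payload_bits_def reaches_conf_refl s0)
    next
      case F2: False
      have pd: "payload_bits v c d = incr_bits (vdesc_carry d) (bin c)"
        using False F2 by (cases d) (simp_all add: payload_bits_def)
      have ls: "length (bin c) - 1 < length (bin c)" by simp
      have p1: "runs k x s (conf (Emit tr nx ci q (SPay (vdesc_carry d))) ih (counter_tape (bin c)) 0 out)
         (conf (Emit tr nx ci q SRewC) ih (counter_tape (bin c)) (length (bin c) - 1)
            (out @ incr_bits (vdesc_carry d) (drop 0 (bin c))))"
        using emit_counter_payload[OF a(1,2,3) False[unfolded d_def] F2[unfolded d_def] bin_not_Nil a(5), where i=0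
          and m="length (bin c)" and c="vdesc_carry d" and nx=nx and out="out"]
        by (simp add: d_def)
      have p2: "runs k x s (conf (Emit tr nx ci q SRewC) ih (counter_tape (bin c)) (length (bin c) - 1)
            (out @ incr_bits (vdesc_carry d) (drop 0 (bin c))))
         (conf (Emit tr nx ci q SSep) ih (counter_tape (bin c)) 0
            (out @ incr_bits (vdesc_carry d) (drop 0 (bin c))))"
        using rewind_counter[OF a(1,2,3) a(5) ls] by simp
      show ?thesis using reaches_trans[OF p1 p2] pd by simp
    qed
  qed
qed

lemma emit_copy_var:
  assumes a: "ci < length (copy_choices k)" "q < width k" "ih \<le> Suc (length x)" "0 < c" "length (bin c) < s"
    "vdesc_from_input (triple_nth tr (q div (k+1))) \<Longrightarrow> var_field_at x ih v"
  shows "runs k x s (conf (Emit tr nx ci q (SBit 0)) ih (counter_tape (bin c)) 0 out)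
     (conf (Emit tr nx ci q SSep) ih (counter_tape (bin c)) 0
        (out @ bin (copy_var k (copy_choices k ! ci ! q) (vdesc_code v c (triple_nth tr (q div (k+1)))))))"
proof -
  define d where "d = triple_nth tr (q div (k+1))"
  define j where "j = copy_choices k ! ci ! q"
  define T where "T = counter_tape (bin c)"
  have s0: "0 < s" using a(5) by simp
  have jN: "j < ncopies k" using copy_choices_nth[OF a(1,2)] by (simp add: j_def)
  have r1: "runs k x s (conf (Emit tr nx ci q (SBit 0)) ih T 0 out)
     (conf (Emit tr nx ci q (SKind 0)) ih T 0 (out @ low_bits (ncopies k) j))"
    using emit_index_bits[OF a(1,2) s0 a(3), of 0 "ncopies k" tr nx T out] by (simp add: low_bits_eq_map j_def)
  have r2: "runs k x s (conf (Emit tr nx ci q (SKind 0)) ih T 0 (out @ low_bits (ncopies k) j))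
     (conf (Emit tr nx ci q (SPay (vdesc_carry d))) ih T 0 (out @ low_bits (ncopies k) j @ low_bits 3 (vdesc_kind d)))"
    using emit_kind_bits[OF a(1,2) s0 a(3), of tr nx T "out @ low_bits (ncopies k) j"] by (simp add: d_def)
  have r3: "runs k x s (conf (Emit tr nx ci q (SPay (vdesc_carry d))) ih T 0 (out @ low_bits (ncopies k) j @ low_bits 3 (vdesc_kind d)))
     (conf (Emit tr nx ci q SSep) ih T 0 (out @ low_bits (ncopies k) j @ low_bits 3 (vdesc_kind d) @ payload_bits v c d))"
    using emit_payload[where tr=tr and nx=nx and out="out @ low_bits (ncopies k) j @ low_bits 3 (vdesc_kind d)", OF a]
    by (simp add: d_def T_def)
  have "bin (copy_var k j (vdesc_code v c d)) = low_bits (ncopies k) j @ low_bits 3 (vdesc_kind d) @ payload_bits v c d"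
    by (rule bin_copy_var[OF jN a(4)])
  then show ?thesis using reaches_trans[OF reaches_trans[OF r1 r2] r3] by (simp add: d_def j_def T_def)
qed

lemma div_width: "q < width k \<Longrightarrow> q div (k+1) < 3"
  by (simp add: width_def less_mult_imp_div_less)

lemma div_width_Suc: "q < width k \<Longrightarrow> q div Suc k < 3"
  using div_width by simp

lemma emit_positions:
  assumes a: "ci < length (copy_choices k)" "ih \<le> Suc (length x)" "0 < c" "length (bin c) < s"
    "\<forall>i<3. vdesc_from_input (triple_nth tr i) \<longrightarrow> var_field_at x ih v"
  shows "width k - q = m \<Longrightarrow> q < width k \<Longrightarrow> runs k x s (conf (Emit tr nx ci q (SBit 0)) ih (counter_tape (bin c)) 0 out)
    (conf (Emit tr nx ci (width k - 1) SCl) ih (counter_tape (bin c)) 0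
       (out @ concat (map (\<lambda>q. bin (copy_var k (copy_choices k ! ci ! q) (vdesc_code v c (triple_nth
           tr (q div (k+1))))) @ [SEndLit]) [q..<width k])))"
proof (induction m arbitrary: q out)
  case 0 then show ?case by simp
next
  case (Suc m)
  let ?nm = "\<lambda>q. bin (copy_var k (copy_choices k ! ci ! q) (vdesc_code v c (triple_nth tr (q div (k+1)))))"
  have s0: "0 < s" using a(4) by simp
  have np: "runs k x s (conf (Emit tr nx ci q (SBit 0)) ih (counter_tape (bin c)) 0 out)
     (conf (Emit tr nx ci q SSep) ih (counter_tape (bin c)) 0 (out @ ?nm q))"
    using emit_copy_var[OF a(1) Suc.prems(2) a(2,3,4)] a(5) div_width[OF Suc.prems(2)] by blast
  have u: "[q..<width k] = q # [Suc q..<width k]" using Suc.prems by (simp add: upt_conv_Cons)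
  have nxt: "runs k x s (conf (Emit tr nx ci q SSep) ih (counter_tape (bin c)) 0 (out @ ?nm q))
     (conf (Emit tr nx ci (width k - 1) SCl) ih (counter_tape (bin c)) 0
       (out @ concat (map (\<lambda>q. ?nm q @ [SEndLit]) [q..<width k])))"
  proof (rule tr_sep[OF a(1) Suc.prems(2) s0 a(2)])
    show "runs k x s (conf (if Suc q < width k then Emit tr nx ci (Suc q) (SBit 0) else Emit tr nx ci q SCl) ih (counter_tape (bin c)) 0
      ((out @ ?nm q) @ [SEndLit])) (conf (Emit tr nx ci (width k - 1) SCl) ih (counter_tape (bin c)) 0
       (out @ concat (map (\<lambda>q. ?nm q @ [SEndLit]) [q..<width k])))"
    proof (cases "Suc q < width k")
      case True
      then show ?thesis using Suc.IH[of "Suc q" "(out @ ?nm q) @ [SEndLit]"] Suc.prems u by simp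
    next
      case False
      then have "q = width k - 1" "[Suc q..<width k] = []" using Suc.prems by auto
      then show ?thesis using False u by (simp add: reaches_conf_refl s0)
    qed
  qed
  show ?case using reaches_trans[OF np nxt] .
qed

lemma emit_clauses:
  assumes a: "ih \<le> Suc (length x)" "0 < c" "length (bin c) < s"
    "\<forall>i<3. vdesc_from_input (triple_nth tr i) \<longrightarrow> var_field_at x ih v"
  shows "length (copy_choices k) - ci = m \<Longrightarrow> ci < length (copy_choices k) \<Longrightarrow>
    runs k x s (conf (Emit tr nx ci 0 (SBit 0)) ih (counter_tape (bin c)) 0 out)
    (conf (Phase nx) ih (counter_tape (bin c)) 0
       (out @ concat (map (\<lambda>ci. concat (map (\<lambda>q. bin (copy_var k (copy_choices k ! ci ! q)
           (vdesc_code v c (triple_nth tr (q div (k+1))))) @ [SEndLit]) [0..<width k])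
           @ [SEndClause]) [ci..<length (copy_choices k)])))"
proof (induction m arbitrary: ci out)
  case 0 then show ?case by simp
next
  case (Suc m)
  let ?cl = "\<lambda>ci. concat (map (\<lambda>q. bin (copy_var k (copy_choices k ! ci ! q) (vdesc_code v c
      (triple_nth tr (q div (k+1))))) @ [SEndLit]) [0..<width k])"
  have s0: "0 < s" using a(3) by simp
  have ql: "runs k x s (conf (Emit tr nx ci 0 (SBit 0)) ih (counter_tape (bin c)) 0 out)
     (conf (Emit tr nx ci (width k - 1) SCl) ih (counter_tape (bin c)) 0 (out @ ?cl ci))"
    using emit_positions[OF Suc.prems(2) a, where q=0 and m="width k" and nx=nx and out=out] by simp
  have u: "[ci..<length (copy_choices k)] = ci # [Suc ci..<length (copy_choices k)]" using Suc.prems by (simp add: upt_conv_Cons)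
  have q1: "width k - 1 < width k" by simp
  have nxt: "runs k x s (conf (Emit tr nx ci (width k - 1) SCl) ih (counter_tape (bin c)) 0 (out @ ?cl ci))
     (conf (Phase nx) ih (counter_tape (bin c)) 0 (out @ concat (map (\<lambda>ci. ?cl ci @ [SEndClause]) [ci..<length (copy_choices k)])))"
  proof (rule tr_cl[OF Suc.prems(2) q1 s0 a(1)])
    show "runs k x s (conf (if Suc ci < length (copy_choices k) then Emit tr nx (Suc ci) 0 (SBit 0)
        else Phase nx) ih (counter_tape (bin c)) 0
      ((out @ ?cl ci) @ [SEndClause])) (conf (Phase nx) ih (counter_tape (bin c)) 0
       (out @ concat (map (\<lambda>ci. ?cl ci @ [SEndClause]) [ci..<length (copy_choices k)])))"
    proof (cases "Suc ci < length (copy_choices k)")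
      case True
      then show ?thesis using Suc.IH[of "Suc ci" "(out @ ?cl ci) @ [SEndClause]"] Suc.prems u by simp
    next
      case False
      then have "[Suc ci..<length (copy_choices k)] = []" by auto
      then show ?thesis using False u by (simp add: reaches_conf_refl s0)
    qed
  qed
  show ?case using reaches_trans[OF ql nxt] .
qed

lemma triple_nth_codes: "i < 3 \<Longrightarrow> triple_nth (triple_codes v c tr) i = vdesc_code v c (triple_nth tr i)"
proof -
  assume "i < 3"
  then have "i = 0 \<or> i = 1 \<or> i = 2" by auto
  then show ?thesis by (auto simp: triple_nth_def triple_codes_def)
qed

lemma map_eq_map_nth: "map f xs = map (\<lambda>i. f (xs ! i)) [0..<length xs]"
  by (rule nth_equalityI) simp_all

lemma enc_nae_amplify: "enc_nae (amplify k (triple_codes v c tr)) =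
  concat (map (\<lambda>ci. concat (map (\<lambda>q. bin (copy_var k (copy_choices k ! ci ! q) (vdesc_code v c
      (triple_nth tr (q div (k+1))))) @ [SEndLit]) [0..<width k])
      @ [SEndClause]) [0..<length (copy_choices k)])"
proof -
  have "enc_nae (amplify k (triple_codes v c tr)) = concat (map (\<lambda>J. concat (map (\<lambda>q. bin (copy_var
      k (J!q) (triple_nth (triple_codes v c tr) (q div (k+1)))) @ [SEndLit]) [0..<width k])
      @ [SEndClause]) (copy_choices k))"
    by (simp add: enc_nae_def amplify_def comp_def)
  also have "\<dots> = concat (map (\<lambda>ci. concat (map (\<lambda>q. bin (copy_var k (copy_choices k ! ci ! q)
      (triple_nth (triple_codes v c tr) (q div (k+1)))) @ [SEndLit]) [0..<width k])
      @ [SEndClause]) [0..<length (copy_choices k)])"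
    by (subst map_eq_map_nth) simp
  also have "\<dots> = concat (map (\<lambda>ci. concat (map (\<lambda>q. bin (copy_var k (copy_choices k ! ci ! q)
      (vdesc_code v c (triple_nth tr (q div (k+1))))) @ [SEndLit]) [0..<width k])
      @ [SEndClause]) [0..<length (copy_choices k)])"
    by (intro arg_cong[where f=concat] map_cong refl arg_cong2[where f="(@)"]) (simp add: triple_nth_codes div_width_Suc)
  finally show ?thesis .
qed

lemma emit_amplify:
  assumes a: "ih \<le> Suc (length x)" "0 < c" "length (bin c) < s"
    "\<forall>i<3. vdesc_from_input (triple_nth tr i) \<longrightarrow> var_field_at x ih v"
  shows "runs k x s (conf (Emit tr nx 0 0 (SBit 0)) ih (counter_tape (bin c)) 0 out)
    (conf (Phase nx) ih (counter_tape (bin c)) 0 (out @ enc_nae (amplify k (triple_codes v c tr))))"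
  using emit_clauses[OF a, where m="length (copy_choices k)" and ci=0 and nx=nx and out=out]
      copy_choices_nonempty[of k] by (simp add: enc_nae_amplify)

lemma skip_var_field:
  assumes a: "wh < s" "x = pre @ ds @ SEndLit # rest" "set ds \<subseteq> {S0, S1}"
  shows "length ds - i = m \<Longrightarrow> i \<le> length ds \<Longrightarrow>
    runs k x s (conf (Phase Skip) (length pre + 1 + i) wt wh out) (conf (Phase IncA) (length pre + length ds + 2) wt wh out)"
proof (induction m arbitrary: i)
  case 0
  then have i: "i = length ds" by simp
  have r: "read_in x (length pre + 1 + i) = Some SEndLit"
    using read_in_append[of 0 "[SEndLit]" "pre @ ds" rest] i a(2) by simp
  show ?case
    apply (rule tr_skip_end[OF a(1)])
    using a(2) r i by (auto simp: is_digit_def reaches_conf_refl a(1))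
next
  case (Suc m)
  then have i: "i < length ds" by simp
  have r: "read_in x (length pre + 1 + i) = Some (ds ! i)"
    using read_in_append[of i ds pre "SEndLit # rest"] i a(2) by simp
  have dg: "ds ! i = S0 \<or> ds ! i = S1" using a(3) i nth_mem by blast
  show ?case
    using Suc.IH[of "Suc i"] Suc.prems a(2) i r dg
    by - (rule tr_skip_dig[OF a(1)], auto simp: is_digit_def)
qed

lemma rewind_counter_inc:
  assumes a: "ih \<le> Suc (length x)" "length Y < s" "Y \<noteq> []"
  shows "i < length Y \<Longrightarrow> runs k x s (conf (Phase IncB) ih (counter_tape Y) i out) (conf (Phase LitNext) ih (counter_tape Y) 0 out)"
proof (induction i)
  case 0
  show ?case
    apply (rule tr_incb_0)
    using a counter_tape_first[OF a(3)] by (auto simp: reaches_conf_refl)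
next
  case (Suc i)
  show ?case
    apply (rule tr_incb)
    using Suc a counter_tape_pos[of "Suc i" Y] by auto
qed

definition cell_code :: "nat \<Rightarrow> sym \<Rightarrow> nat" where
  "cell_code i b = (if i = 0 then (if b = S1 then 4 else 3) else (if b = S1 then 2 else 1))"

lemma counter_tape_update: "i < length X \<Longrightarrow> (counter_tape X)(i := cell_code i b) = counter_tape (X[i := b])"
  by (rule ext) (auto simp: counter_tape_def cell_code_def nth_list_update)

lemma counter_tape_snoc: "X \<noteq> [] \<Longrightarrow> (counter_tape X)(length X := 2) = counter_tape (X @ [S1])"
  by (rule ext) (auto simp: counter_tape_def nth_append)

lemma increment_counter_loop:
  assumes a: "ih \<le> Suc (length x)" "length (incr_bits True l) < s" "l \<noteq> []" "set l \<subseteq> {S0, S1}"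
  shows "length l - i = m \<Longrightarrow> i \<le> length l \<Longrightarrow> (\<forall>j<i. l ! j = S1) \<Longrightarrow>
    runs k x s (conf (Phase IncA) ih (counter_tape (replicate i S0 @ drop i l)) i out)
      (conf (Phase LitNext) ih (counter_tape (incr_bits True l)) 0 out)"
proof (induction m arbitrary: i)
  have ls: "length l < s" using a(2) length_incr_bits[of l True] by simp
  case 0
  then have i: "i = length l" and ip: "0 < i" using a(3) by auto
  have inc: "incr_bits True l = replicate i S0 @ [S1]"
    using incr_bits_all_ones 0(3) i by simp
  have "counter_tape (replicate i S0) i = 0" using counter_tape_end[of "replicate i S0"] by simp
  moreover have "(counter_tape (replicate i S0))(i := 2) = counter_tape (incr_bits True l)"
    using counter_tape_snoc[of "replicate i S0"] ip inc by simp
  moreover have "runs k x s (conf (Phase IncB) ih (counter_tape (incr_bits True l)) (i - 1) out)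
      (conf (Phase LitNext) ih (counter_tape (incr_bits True l)) 0 out)"
    using a(1,2) i ip inc by (intro rewind_counter_inc) simp_all
  ultimately show ?case using i ls a(1) by - (rule tr_inca_e, simp_all)
next
  have ls: "length l < s" using a(2) length_incr_bits[of l True] by simp
  case (Suc m)
  then have i: "i < length l" by simp
  let ?X = "replicate i S0 @ drop i l"
  have lx: "i < length ?X" using i by simp
  have cell: "counter_tape ?X i = cell_code i (l ! i)"
    using i by (simp add: counter_tape_def cell_code_def nth_append)
  have "l ! i \<in> {S0, S1}" using a(4) i nth_mem by blast
  then consider "l ! i = S1" | "l ! i = S0" by blast
  then show ?case
  proof cases
    case 1
    have IH: "runs k x s (conf (Phase IncA) ih (counter_tape (replicate (Suc i) S0 @ drop (Suc i) l)) (Suc i) out)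
      (conf (Phase LitNext) ih (counter_tape (incr_bits True l)) 0 out)"
      using Suc.IH[of "Suc i"] Suc.prems 1 by (auto simp: less_Suc_eq)
    have tu: "(counter_tape ?X)(i := cell_code i S0) = counter_tape (replicate (Suc i) S0 @ drop (Suc i) l)"
      using counter_tape_update[OF lx, of S0] replicate_drop_update_S0[OF i] by simp
    show ?thesis
    proof (cases "i = 0")
      case True
      then show ?thesis using IH tu cell 1 i ls a(1)
        by - (rule tr_inca_4, simp_all add: cell_code_def)
    next
      case False
      then show ?thesis using IH tu cell 1 i ls a(1)
        by - (rule tr_inca_2, simp_all add: cell_code_def)
    qed
  next
    case 2
    have inc: "incr_bits True l = ?X[i := S1]"
      using incr_bits_first_zero[OF a(4) i _ 2] Suc.prems(3) by simp
    have tu: "(counter_tape ?X)(i := cell_code i S1) = counter_tape (incr_bits True l)"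
      using counter_tape_update[OF lx, of S1] inc by simp
    show ?thesis
    proof (cases "i = 0")
      case True
      then show ?thesis using tu cell 2 i ls a(1)
        by - (rule tr_inca_3, simp_all add: cell_code_def reaches_conf_refl[of 0 s])
    next
      case False
      have "length (incr_bits True l) = length l" using inc i by simp
      then have "runs k x s (conf (Phase IncB) ih (counter_tape (incr_bits True l)) (i - 1) out)
          (conf (Phase LitNext) ih (counter_tape (incr_bits True l)) 0 out)"
        using a(1,2) i False by (intro rewind_counter_inc) auto
      then show ?thesis using tu cell 2 i ls a(1) False
        by - (rule tr_inca_e, simp_all add: cell_code_def)
    qed
  qed
qed

lemma increment_counter:
  assumes a: "ih \<le> Suc (length x)" "length (bin (Suc c)) < s"
  shows "runs k x s (conf (Phase IncA) ih (counter_tape (bin c)) 0 out) (conf (Phase LitNext) ih (counter_tape (bin (Suc c))) 0 out)"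
  using increment_counter_loop[OF a(1) _ bin_not_Nil set_bin, where i=0 and m="length (bin c)"] a(2) by (simp add: incr_bits_bin)

lemma read_lit_sign:
  assumes x: "x = pre @ enc_lit (pol, v) @ rest" and s0: "0 < s"
  shows "runs k x s (conf (Phase (LitS f)) (length pre + 1) T 0 out)
     (conf (Phase (LitV f pol)) (length pre + (if pol then 0 else 1) + 1) T 0 out)"
proof (cases pol)
  case True
  have "read_in x (length pre + 1 + 0) = Some (bin v ! 0)"
    using read_in_append[of 0 "bin v" pre "SEndLit # rest"] x True by (simp add: enc_lit_def)
  moreover have "bin v ! 0 \<in> {S0, S1}" using set_bin[of v] bin_not_Nil[of v] nth_mem by blast
  ultimately have "read_in x (length pre + 1) \<noteq> Some SNeg" by auto
  then show ?thesis using True x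
    by (intro tr_lits_pos[OF s0]) (auto simp: enc_lit_def reaches_conf_refl s0)
next
  case False
  have "read_in x (length pre + 1 + 0) = Some SNeg"
    using read_in_append[of 0 "[SNeg]" pre "bin v @ SEndLit # rest"] x False by (simp add: enc_lit_def)
  then show ?thesis using False x
    by (intro tr_lits_neg[OF s0]) (auto simp: enc_lit_def reaches_conf_refl s0)
qed

lemma lit_run:
  assumes a: "x = pre @ enc_lit (pol, v) @ rest" "pre = [] \<or> last pre \<notin> {S0,S1}" "0 < c"
    "length (bin (Suc c)) < s"
  shows "runs k x s (conf (Phase (LitS f)) (length pre + 1) (counter_tape (bin c)) 0 out)
   (conf (Phase LitNext) (length pre + length (enc_lit (pol,v)) + 1) (counter_tape (bin (Suc c))) 0
      (out @ enc_nae (concat (map (amplify k) (map (triple_codes v c) (lit_triples f pol))))))"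
proof -
  define pre' where "pre' = pre @ (if pol then [] else [SNeg])"
  define T where "T = counter_tape (bin c)"
  define vs where "vs = length pre' + 1"
  have x': "x = pre' @ bin v @ SEndLit # rest" using a(1) by (simp add: pre'_def enc_lit_def)
  have nd': "pre' = [] \<or> last pre' \<notin> {S0,S1}" using a(2) by (auto simp: pre'_def)
  have field: "var_field_at x vs v" using x' nd' by (auto simp: var_field_at_def vs_def)
  have lc: "length (bin c) < s" using a(4) length_bin_mono[of c "Suc c"] by simp
  have s0: "0 < s" using lc by simp
  have vsb: "vs \<le> Suc (length x)" using x' by (simp add: vs_def)
  have ii: "\<forall>i<3. vdesc_from_input (triple_nth tr i) \<longrightarrow> var_field_at x vs v" for tr using field by blast
  let ?o1 = "out @ enc_nae (amplify k (triple_codes v c (DP,DQ,DQ)))"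
  let ?o2 = "?o1 @ enc_nae (amplify k (triple_codes v c (mid_triple f pol)))"
  let ?o3 = "?o2 @ enc_nae (amplify k (triple_codes v c (DD True, DE True, DE True)))"
  have r0: "runs k x s (conf (Phase (LitS f)) (length pre + 1) T 0 out) (conf (Phase (LitV f pol)) vs T 0 out)"
    using read_lit_sign[OF a(1) s0, of k f T out] by (cases pol) (simp_all add: vs_def pre'_def)
  have r1: "runs k x s (conf (Phase (LitV f pol)) vs T 0 out) (conf (Phase (T2 f pol)) vs T 0 ?o1)"
    by (rule tr_litv[OF s0 vsb]) (unfold T_def, rule emit_amplify[OF vsb a(3) lc ii])
  have r2: "runs k x s (conf (Phase (T2 f pol)) vs T 0 ?o1) (conf (Phase T3) vs T 0 ?o2)"
    by (rule tr_t2[OF s0 vsb]) (unfold T_def, rule emit_amplify[OF vsb a(3) lc ii])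
  have r3: "runs k x s (conf (Phase T3) vs T 0 ?o2) (conf (Phase Skip) vs T 0 ?o3)"
    by (rule tr_t3[OF s0 vsb]) (unfold T_def, rule emit_amplify[OF vsb a(3) lc ii])
  have r4: "runs k x s (conf (Phase Skip) vs T 0 ?o3) (conf (Phase IncA) (length pre' + length (bin v) + 2) T 0 ?o3)"
    using skip_var_field[OF s0 x' set_bin, where i=0 and m="length (bin v)" and wt=T and out="?o3"]
    by (simp add: vs_def)
  have lb: "length pre' + length (bin v) + 2 \<le> Suc (length x)" using x' by simp
  have r5: "runs k x s (conf (Phase IncA) (length pre' + length (bin v) + 2) T 0 ?o3)
      (conf (Phase LitNext) (length pre' + length (bin v) + 2) (counter_tape (bin (Suc c))) 0 ?o3)"
    unfolding T_def by (rule increment_counter[OF lb a(4)])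
  have pos: "length pre' + length (bin v) + 2 = length pre + length (enc_lit (pol,v)) + 1"
    by (simp add: pre'_def enc_lit_def)
  have o: "?o3 = out @ enc_nae (concat (map (amplify k) (map (triple_codes v c) (lit_triples f pol))))"
    by (simp add: lit_triples_def)
  show ?thesis using reaches_trans[OF reaches_trans[OF reaches_trans[OF reaches_trans[OF reaches_trans[OF r0 r1] r2] r3] r4] r5]
    unfolding pos o T_def .
qed

lemma lits_run:
  assumes c0: "0 < c"
  shows "ls \<noteq> [] \<Longrightarrow> x = pre @ concat (map enc_lit ls) @ SEndClause # rest \<Longrightarrow> (pre = [] \<or> last pre \<notin> {S0,S1}) \<Longrightarrow>
    length (bin (c + length ls)) < s \<Longrightarrow>
   runs k x s (conf (Phase (LitS f)) (length pre + 1) (counter_tape (bin c)) 0 out)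
     (conf (Phase LitNext) (length pre + length (concat (map enc_lit ls)) + 1) (counter_tape (bin (c + length ls))) 0
        (out @ enc_nae (concat (map (amplify k) (lits_triples f c ls)))))"
  using c0
proof (induction ls arbitrary: f c pre out)
  case Nil then show ?case by simp
next
  case (Cons l ls)
  obtain pol v where l: "l = (pol, v)" by (cases l)
  let ?rest = "concat (map enc_lit ls) @ SEndClause # rest"
  have x: "x = pre @ enc_lit (pol, v) @ ?rest" using Cons.prems(2) l by simp
  have b1: "length (bin (Suc c)) < s"
    using Cons.prems(4) length_bin_mono[of "Suc c" "c + length (l#ls)"] by simp
  have r1: "runs k x s (conf (Phase (LitS f)) (length pre + 1) (counter_tape (bin c)) 0 out)
   (conf (Phase LitNext) (length pre + length (enc_lit (pol,v)) + 1) (counter_tape (bin (Suc c))) 0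
      (out @ enc_nae (concat (map (amplify k) (map (triple_codes v c) (lit_triples f pol))))))"
    by (rule lit_run[OF x Cons.prems(3) Cons.prems(5) b1])
  show ?case
  proof (cases "ls = []")
    case True
    then show ?thesis using r1 l by simp
  next
    case False
    let ?pre = "pre @ enc_lit (pol, v)"
    have x2: "x = ?pre @ concat (map enc_lit ls) @ SEndClause # rest" using x by simp
    have nd2: "?pre = [] \<or> last ?pre \<notin> {S0,S1}" using enc_lit_hd[of "(pol,v)"] by (simp add: last_enc_lit)
    have b2: "length (bin (Suc c + length ls)) < s" using Cons.prems(4) by simp
    have IH: "runs k x s (conf (Phase (LitS False)) (length ?pre + 1) (counter_tape (bin (Suc c))) 0
        (out @ enc_nae (concat (map (amplify k) (map (triple_codes v c) (lit_triples f pol))))))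
      (conf (Phase LitNext) (length ?pre + length (concat (map enc_lit ls)) + 1) (counter_tape (bin (Suc c + length ls))) 0
        ((out @ enc_nae (concat (map (amplify k) (map (triple_codes v c) (lit_triples f pol))))) @
          enc_nae (concat (map (amplify k) (lits_triples False (Suc c) ls)))))"
      using Cons.IH[where f=False and c="Suc c" and pre="pre @ enc_lit (pol, v)"
        and out="out @ enc_nae (concat (map (amplify k) (map (triple_codes v c) (lit_triples f pol))))", OF False x2 nd2 b2]
      by simp
    obtain l2 ls2 where ls: "ls = l2 # ls2" using False by (cases ls) auto
    have rd: "read_in x (length ?pre + 1 + 0) = Some (enc_lit l2 ! 0)"
      using read_in_append[of 0 "enc_lit l2" ?pre "concat (map enc_lit ls2) @ SEndClause # rest"] x2 ls enc_lit_hd[of l2]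
      by simp
    have s0: "0 < s" using b1 by simp
    have r2: "runs k x s (conf (Phase LitNext) (length pre + length (enc_lit (pol,v)) + 1) (counter_tape (bin (Suc c))) 0
        (out @ enc_nae (concat (map (amplify k) (map (triple_codes v c) (lit_triples f pol))))))
      (conf (Phase LitNext) (length ?pre + length (concat (map enc_lit ls)) + 1) (counter_tape (bin (Suc c + length ls))) 0
        ((out @ enc_nae (concat (map (amplify k) (map (triple_codes v c) (lit_triples f pol))))) @
          enc_nae (concat (map (amplify k) (lits_triples False (Suc c) ls)))))"
      using IH x2 rd conjunct2[OF enc_lit_hd[of l2]]
      by - (rule tr_ln_lit[OF s0], simp_all)
    show ?thesis using reaches_trans[OF r1 r2] l by (simp add: add.assoc)
  qed
qed

lemma emit_clause_end:
  assumes "p \<le> length x" "0 < c" "length (bin c) < s" "\<forall>i<3. \<not> vdesc_from_input (triple_nth tr i)"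
  shows "runs k x s (conf (Emit tr AfterCl 0 0 (SBit 0)) p (counter_tape (bin c)) 0 out)
    (conf (Phase ClBegin) (Suc p) (counter_tape (bin c)) 0 (out @ enc_nae (amplify k (triple_codes 0 c tr))))"
proof -
  have s0: "0 < s" using assms(3) by simp
  have "runs k x s (conf (Emit tr AfterCl 0 0 (SBit 0)) p (counter_tape (bin c)) 0 out)
      (conf (Phase AfterCl) p (counter_tape (bin c)) 0 (out @ enc_nae (amplify k (triple_codes 0 c tr))))"
    using assms by (intro emit_amplify) auto
  moreover have "runs k x s (conf (Phase AfterCl) p (counter_tape (bin c)) 0 out')
      (conf (Phase ClBegin) (Suc p) (counter_tape (bin c)) 0 out')" for out'
    by (rule tr_after[OF s0 assms(1)]) (rule reaches_conf_refl[OF s0])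
  ultimately show ?thesis by (rule reaches_trans)
qed

lemma clause_end_triple_not_from_input:
  assumes "i < 3" shows "\<not> vdesc_from_input (triple_nth (clause_end_triple C) i)"
proof -
  have "i = 0 \<or> i = 1 \<or> i = 2" using assms by auto
  then show ?thesis by (auto simp: triple_nth_def clause_end_triple_def)
qed

lemma clause_run:
  assumes a: "x = pre @ concat (map enc_lit C) @ SEndClause # rest" "pre = [] \<or> last pre \<notin> {S0,S1}" "0 < c"
    "length (bin (c + length C)) < s"
  shows "runs k x s (conf (Phase ClBegin) (length pre + 1) (counter_tape (bin c)) 0 out)
    (conf (Phase ClBegin) (length pre + length (concat (map enc_lit C)) + 2) (counter_tape (bin (c + length C))) 0
      (out @ enc_nae (concat (map (amplify k) (lits_triples True c C @ [triple_codes 0 (c + length C) (clause_end_triple C)])))))"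
proof -
  have s0: "0 < s" using a(4) by simp
  let ?p = "length pre + length (concat (map enc_lit C)) + 1"
  let ?T = "counter_tape (bin (c + length C))"
  let ?E = "enc_nae (amplify k (triple_codes 0 (c + length C) (clause_end_triple C)))"
  have rdE: "read_in x ?p = Some SEndClause"
    using read_in_append[of 0 "[SEndClause]" "pre @ concat (map enc_lit C)" rest] a(1) by simp
  have pb: "?p \<le> length x" using a(1) by simp
  have clause_end: "runs k x s (conf (Emit (clause_end_triple C) AfterCl 0 0 (SBit 0)) ?p ?T 0 out')
      (conf (Phase ClBegin) (Suc ?p) ?T 0 (out' @ ?E))" for out'
    using pb a(3,4) clause_end_triple_not_from_input by (intro emit_clause_end) auto
  show ?thesis
  proof (cases "C = []")
    case True
    then show ?thesis using clause_end[of out] rdE a(1)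
      by - (rule tr_clb_end[OF s0], simp_all add: clause_end_triple_def)
  next
    case False
    obtain l2 C2 where C: "C = l2 # C2" using False by (cases C) auto
    have rd: "read_in x (length pre + 1) = Some (enc_lit l2 ! 0)"
      using read_in_append[of 0 "enc_lit l2" pre "concat (map enc_lit C2) @ SEndClause # rest"] a(1) C
        enc_lit_hd[of l2] by simp
    let ?L = "out @ enc_nae (concat (map (amplify k) (lits_triples True c C)))"
    have lits: "runs k x s (conf (Phase (LitS True)) (length pre + 1) (counter_tape (bin c)) 0 out)
        (conf (Phase LitNext) ?p ?T 0 ?L)"
      using lits_run[OF a(3) False a(1) a(2) a(4)] by simp
    have "runs k x s (conf (Phase LitNext) ?p ?T 0 ?L) (conf (Phase ClBegin) (Suc ?p) ?T 0 (?L @ ?E))"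
      using clause_end[of ?L] rdE pb False by - (rule tr_ln_end[OF s0], simp_all add: clause_end_triple_def)
    then show ?thesis using reaches_trans[OF lits] rd conjunct2[OF enc_lit_hd[of l2]] a(1)
      by - (rule tr_clb_lit[OF s0, where sy="enc_lit l2 ! 0"], simp_all)
  qed
qed

lemma cnf_run:
  "x = pre @ enc_cnf F \<Longrightarrow> (pre = [] \<or> last pre \<notin> {S0,S1}) \<Longrightarrow> 0 < c \<Longrightarrow> length (bin (c + nlits F)) < s \<Longrightarrow>
   runs k x s (conf (Phase ClBegin) (length pre + 1) (counter_tape (bin c)) 0 out)
     (conf (Phase ClBegin) (length x + 1) (counter_tape (bin (c + nlits F))) 0 (out
         @ enc_nae (concat (map (amplify k) (cnf_triples c F)))))"
proof (induction F arbitrary: pre c out)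
  case Nil
  have "0 < s" using Nil.prems(4) by simp
  then show ?case using Nil by (simp add: reaches_conf_refl enc_cnf_def nlits_def enc_nae_def)
next
  case (Cons C F)
  let ?pre = "pre @ concat (map enc_lit C) @ [SEndClause]"
  have x: "x = pre @ concat (map enc_lit C) @ SEndClause # enc_cnf F" using Cons.prems(1) by (simp add: enc_cnf_def)
  have b1: "length (bin (c + length C)) < s"
    using Cons.prems(4) length_bin_mono[of "c + length C" "c + nlits (C#F)"] by (simp add: nlits_def)
  have r1: "runs k x s (conf (Phase ClBegin) (length pre + 1) (counter_tape (bin c)) 0 out)
    (conf (Phase ClBegin) (length pre + length (concat (map enc_lit C)) + 2) (counter_tape (bin (c + length C))) 0
      (out @ enc_nae (concat (map (amplify k) (lits_triples True c C @ [triple_codes 0 (c + length C) (clause_end_triple C)])))))"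
    by (rule clause_run[OF x Cons.prems(2,3) b1])
  have x2: "x = ?pre @ enc_cnf F" using x by simp
  have nd2: "?pre = [] \<or> last ?pre \<notin> {S0,S1}" by simp
  have b2: "length (bin (c + length C + nlits F)) < s" using Cons.prems(4) by (simp add: nlits_def add.assoc)
  have c2: "0 < c + length C" using Cons.prems(3) by simp
  have r2: "runs k x s (conf (Phase ClBegin) (length pre + length (concat (map enc_lit C)) + 2) (counter_tape (bin (c + length C))) 0
      (out @ enc_nae (concat (map (amplify k) (lits_triples True c C @ [triple_codes 0 (c + length C) (clause_end_triple C)])))))
     (conf (Phase ClBegin) (length x + 1) (counter_tape (bin (c + length C + nlits F))) 0
      ((out @ enc_nae (concat (map (amplify k) (lits_triples True c C @ [triple_codes 0 (c + length C) (clause_end_triple C)])))) @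
        enc_nae (concat (map (amplify k) (cnf_triples (c + length C) F)))))"
    using Cons.IH[OF x2 nd2 c2 b2, where out="out @ enc_nae (concat (map (amplify k) (lits_triples
        True c C @ [triple_codes 0 (c + length C) (clause_end_triple C)])))"]
    by simp
  have e: "c + length C + nlits F = c + nlits (C # F)" by (simp add: nlits_def)
  show ?case using reaches_trans[OF r1 r2] unfolding e by (simp add: add.assoc)
qed

lemma reduction_machine_computes:
  "computes_in_space (reduction_machine k) (enc_cnf I) (enc_nae (reduction k I))
     (2 * floor_log (length (enc_cnf I) + 2) + 2)"
proof -
  define x where "x = enc_cnf I"
  define s where "s = 2 * floor_log (length x + 2) + 2"
  define T where "T = counter_tape (bin (1 + nlits I))"
  have s0: "0 < s" by (simp add: s_def)
  have counter_fits: "length (bin (1 + nlits I)) < s"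
  proof -
    have "1 + nlits I \<le> length x + 2" using nlits_le_length_enc[of I] by (simp add: x_def)
    then have "floor_log (1 + nlits I) \<le> floor_log (length x + 2)"
      using floor_log_mono by (simp add: mono_def)
    then show ?thesis by (simp add: length_bin s_def)
  qed
  have counter_init: "(\<lambda>_. 0::nat)(0 := 4) = counter_tape (bin 1)"
    by (rule ext) (simp add: bin_less_2 counter_tape_def)
  have clauses: "runs k x s (conf (Phase ClBegin) (Suc 0) (counter_tape (bin 1)) 0 [])
     (conf (Phase ClBegin) (length x + 1) T 0 (enc_nae (reduction k I)))"
    using cnf_run[where x=x and pre="[]" and F=I and c=1 and s=s and k=k and out="[]"] counter_fits
    by (simp add: x_def T_def reduction_def)
  have halt: "runs k x s (conf (Phase ClBegin) (length x + 1) T 0 (enc_nae (reduction k I)))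
     (conf (Phase Halt) (length x + 1) T 0 (enc_nae (reduction k I)))"
    by (rule tr_clb_none[OF s0]) (simp_all add: read_in_def reaches_conf_refl s0)
  have "runs k x s (conf (Phase Init) 0 (\<lambda>_. 0) 0 [])
     (conf (Phase Halt) (length x + 1) T 0 (enc_nae (reduction k I)))"
    using reaches_trans[OF clauses halt] by (intro tr_init[OF s0]) (simp_all add: counter_init)
  moreover have "init_config (reduction_machine k) = conf (Phase Init) 0 (\<lambda>_. 0) 0 []"
    by (simp add: init_config_def reduction_machine_def conf_def)
  ultimately show ?thesis
    unfolding conf_def x_def s_def
    by (intro computes_in_space_if_reaches) (simp_all add: reduction_machine_def)
qed

lemma cnf_sat_iff_nae_sat_reduction: "cnf_sat I \<longleftrightarrow> nae_sat (reduction k I)"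
proof
  assume "cnf_sat I"
  then obtain s where "\<forall>t \<in> set (cnf_triples 1 I). nae3 s t"
    using cnf_sat_imp_triples_nae3 by blast
  then show "nae_sat (reduction k I)" unfolding reduction_def by (rule amplify_sat)
next
  assume "nae_sat (reduction k I)"
  then obtain \<alpha> where "nae_sat_by (concat (map (amplify k) (cnf_triples 1 I))) \<alpha>"
    by (auto simp: nae_sat_def reduction_def)
  then have "\<forall>t\<in>set (cnf_triples 1 I). nae3 (majority k \<alpha>) t"
    by (rule amplify_sat_imp_majority_nae3)
  then show "cnf_sat I" by (rule triples_nae3_imp_cnf_sat)
qed

lemma robust_nae_sat_reduction:
  assumes "0 < k" "cnf_sat I"
  shows "robust_nae_sat k (reduction k I)"
proof -
  obtain s where "\<forall>t \<in> set (cnf_triples 1 I). nae3 s t"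
    using assms(2) cnf_sat_imp_triples_nae3 by blast
  then show ?thesis unfolding reduction_def using amplify_robust assms(1) by blast
qed

lemma logspace_reduction_SAT_NAE_reduction:
  "logspace_reduction_SAT_NAE (3 * k + 3) (reduction k)"
  unfolding logspace_reduction_SAT_NAE_def
proof (intro conjI allI exI)
  show "is_nae_m (3 * k + 3) (reduction k I)" for I
    unfolding is_nae_m_def reduction_def using amplify_length by auto
  show "cnf_sat I \<longleftrightarrow> nae_sat (reduction k I)" for I
    by (rule cnf_sat_iff_nae_sat_reduction)
  show "wf_ltm (reduction_machine k)" by (rule wf_reduction_machine)
  show "computes_in_space (reduction_machine k) (enc_cnf I) (enc_nae (reduction k I))
      (2 * floor_log (length (enc_cnf I) + 2) + 2)" for I
    by (rule reduction_machine_computes)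
qed

theorem theorem4p1:
  fixes k :: nat
  assumes "k > 0"
  shows "\<exists>f. logspace_reduction_SAT_NAE (3 * k + 3) f \<and>
             (\<forall>I. \<not> cnf_sat I \<longrightarrow> \<not> nae_sat (f I)) \<and>
             (\<forall>I. cnf_sat I \<longrightarrow> robust_nae_sat k (f I))"
  using logspace_reduction_SAT_NAE_reduction cnf_sat_iff_nae_sat_reduction
    robust_nae_sat_reduction[OF assms] by blast

end
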